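(* Let $\lambda$ be a nonempty partition with $n=|\lambda|$. For $\mu\in\mathcal{D}(\lambda)$, \[ \sum_{\nu\in\mathcal{U}(\lambda)}\frac{f_\mu f_\nu}{(h_\lambda(c_{\mu,\nu}))^2}=\frac{n+1}{n}(f_\lambda)^2, \] and for $\nu\in\mathcal{U}(\lambda)$, \[ \frac{f_\lambda f_\nu}{n}+\sum_{\mu\in\mathcal{D}(\lambda)}\frac{f_\mu f_\nu}{(h_\lambda(c_{\mu,\nu}))^2}=\frac{n+1}{n}(f_\lambda)^2. \]
   Context: Partitions are Young diagrams (cells $(x,y)\in\mathbb{Z}_{>0}^2$ with $x\le\lambda_y$); $\lambda'$ the conjugate. For $c=(x,y)\in\lambda$, the hook-length is $h_\lambda(c)=(\lambda_y-x)+(\lambda'_x-y)+1$. $f_\kappa$ is the number of standard Young tableaux of shape $\kappa$. $\mathcal{U}(\lambda)$ (resp. $\mathcal{D}(\lambda)$) is the set of partitions obtained from $\lambda$ by adding (resp. removing) one cell. For $\mu\in\mathcal{D}(\lambda)$ and $\nu\in\mathcal{U}(\lambda)$, let $c_1$ be the cell in the row of the cell $\nu/\lambda$ and the column of the cell $\lambda/\mu$, and $c_2$ the cell in the column of $\nu/\lambda$ and the row of $\lambda/\mu$; exactly one of $c_1,c_2$ lies in $\lambda$, and it is denoted $c_{\mu,\nu}$. *)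

theory Defs
  imports "HOL-Library.FuncSet" Complex_Main
begin

text \<open>A partition is identified with its Young diagram: a finite set of cells (x,y) with
  positive coordinates (x = column, y = row) that is closed downwards (a partial order ideal).\<close>

type_synonym cell = "nat \<times> nat"

definition is_partition :: "cell set \<Rightarrow> bool" where
  "is_partition lam \<longleftrightarrow> finite lam \<and> (\<forall>(x,y)\<in>lam. 0 < x \<and> 0 < y) \<and>
     (\<forall>(x,y)\<in>lam. \<forall>x' y'. 0 < x' \<and> x' \<le> x \<and> 0 < y' \<and> y' \<le> y \<longrightarrow> (x',y') \<in> lam)"

definition row_len :: "cell set \<Rightarrow> nat \<Rightarrow> nat" where
  "row_len lam y = card {x. (x,y) \<in> lam}"

definition col_len :: "cell set \<Rightarrow> nat \<Rightarrow> nat" where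
  "col_len lam x = card {y. (x,y) \<in> lam}"

definition hook :: "cell set \<Rightarrow> cell \<Rightarrow> nat" where
  "hook lam c = (row_len lam (snd c) - fst c) + (col_len lam (fst c) - snd c) + 1"

definition syt :: "cell set \<Rightarrow> (cell \<Rightarrow> nat) set" where
  "syt kap = {T \<in> kap \<rightarrow>\<^sub>E {1..card kap}. bij_betw T kap {1..card kap} \<and>
      (\<forall>c\<in>kap. \<forall>d\<in>kap. fst c \<le> fst d \<and> snd c \<le> snd d \<and> c \<noteq> d \<longrightarrow> T c < T d)}"

definition num_syt :: "cell set \<Rightarrow> nat" where
  "num_syt kap = card (syt kap)"

definition up_set :: "cell set \<Rightarrow> cell set set" where
  "up_set lam = {nu. is_partition nu \<and> lam \<subseteq> nu \<and> card (nu - lam) = 1}"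

definition down_set :: "cell set \<Rightarrow> cell set set" where
  "down_set lam = {mu. is_partition mu \<and> mu \<subseteq> lam \<and> card (lam - mu) = 1}"

text \<open>c_{mu,nu}: with (a,b) = nu/lam and (p,q) = lam/mu, c1 = (p,b) lies in the row of nu/lam
  and the column of lam/mu; c2 = (a,q). The one lying in lam.\<close>
definition c_cell :: "cell set \<Rightarrow> cell set \<Rightarrow> cell set \<Rightarrow> cell" where
  "c_cell lam mu nu =
     (let (a,b) = the_elem (nu - lam); (p,q) = the_elem (lam - mu);
          c1 = (p,b); c2 = (a,q)
      in if c1 \<in> lam then c1 else c2)"

end

theory Submission
  imports Defs "HOL-Computational_Algebra.Polynomial"
begin

(* Pad lam with empty rows up to K = n + 2 rows and put x_i = lam_i + K - i. By the Frobenius form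
   of the hook length formula, f_mu / f_lam and f_nu / f_lam are explicit rational functions of the
   x_i when mu removes a box from row j and nu adds one to row i, and the hook length of c_{mu,nu}
   is +-(x_i + 1 - x_j). Each of the two identities then says that the divided difference of a
   suitable polynomial at the nodes x_i (and one extra node x_j - 1, resp. x_i + 1) has the value
   read off from its two leading coefficients. The hook length formula itself is proved the same
   way, by induction on n via the branching rule f_lam = sum of f_mu. *)

section \<open>Divided differences at distinct nodes\<close>

definition node_weight :: "'i set \<Rightarrow> ('i \<Rightarrow> real) \<Rightarrow> 'i \<Rightarrow> real" where
  "node_weight I x i = (\<Prod>m\<in>I - {i}. x i - x m)"

text \<open>The divided difference of \<open>z ^ d\<close> at the nodes \<open>x ` I\<close>, i.e. the complete homogeneous
  symmetric polynomial of degree \<open>d + 1 - card I\<close> in these nodes.\<close>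
definition power_divdiff :: "nat \<Rightarrow> 'i set \<Rightarrow> ('i \<Rightarrow> real) \<Rightarrow> real" where
  "power_divdiff d I x = (\<Sum>i\<in>I. x i ^ d / node_weight I x i)"

lemma node_weight_remove:
  assumes "finite I" "a \<in> I" "i \<in> I" "i \<noteq> a"
  shows "node_weight I x i = (x i - x a) * node_weight (I - {a}) x i"
proof -
  have "node_weight I x i = (x i - x a) * (\<Prod>m\<in>I - {i} - {a}. x i - x m)"
    unfolding node_weight_def by (rule prod.remove) (use assms in auto)
  also have "I - {i} - {a} = I - {a} - {i}" by blast
  finally show ?thesis by (simp only: node_weight_def)
qed

lemma node_weight_nonzero: "finite I \<Longrightarrow> inj_on x I \<Longrightarrow> i \<in> I \<Longrightarrow> node_weight I x i \<noteq> 0"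
  unfolding node_weight_def by (auto simp: inj_on_def)

lemma power_divdiff_remove_node:
  assumes "finite I" "a \<in> I" "inj_on x I"
  shows "(\<Sum>i\<in>I. x i ^ d * (x i - x a) / node_weight I x i) = power_divdiff d (I - {a}) x"
proof -
  have "(\<Sum>i\<in>I. x i ^ d * (x i - x a) / node_weight I x i) =
      (\<Sum>i\<in>I - {a}. x i ^ d * (x i - x a) / node_weight I x i)"
    using assms by (subst sum.remove[of _ a]) auto
  also have "\<dots> = (\<Sum>i\<in>I - {a}. x i ^ d / node_weight (I - {a}) x i)"
  proof (rule sum.cong)
    fix i assume i: "i \<in> I - {a}"
    then have "x i - x a \<noteq> 0" using assms by (auto simp: inj_on_def)
    then show "x i ^ d * (x i - x a) / node_weight I x i = x i ^ d / node_weight (I - {a}) x i"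
      using i assms by (simp add: node_weight_remove)
  qed simp
  finally show ?thesis unfolding power_divdiff_def .
qed

lemma power_divdiff_Suc:
  assumes "finite I" "a \<in> I" "inj_on x I"
  shows "power_divdiff (Suc d) I x = power_divdiff d (I - {a}) x + x a * power_divdiff d I x"
proof -
  have "power_divdiff (Suc d) I x - x a * power_divdiff d I x =
      (\<Sum>i\<in>I. x i ^ d * (x i - x a) / node_weight I x i)"
    unfolding power_divdiff_def sum_distrib_left sum_subtractf[symmetric]
    by (rule sum.cong) (simp_all add: diff_divide_distrib[symmetric] algebra_simps)
  then show ?thesis using power_divdiff_remove_node[OF assms] by simp
qed

lemma power_divdiff_0:
  "finite I \<Longrightarrow> inj_on x I \<Longrightarrow> card I = Suc k \<Longrightarrow> power_divdiff 0 I x = (if k = 0 then 1 else 0)"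
proof (induction k arbitrary: I)
  case 0
  then obtain a where "I = {a}" by (auto simp: card_Suc_eq)
  then show ?case by (simp add: power_divdiff_def node_weight_def)
next
  case (Suc k)
  obtain a b J where ab: "I = insert a (insert b J)" "a \<noteq> b"
    using Suc.prems(3) by (auto simp: card_Suc_eq)
  then have "a \<in> I" "b \<in> I" by auto
  have IH: "power_divdiff 0 (I - {c}) x = (if k = 0 then 1 else 0)" if "c \<in> I" for c
    using Suc.prems that by (intro Suc.IH) (auto simp: inj_on_diff)
  have "(x a - x b) * power_divdiff 0 I x =
      (\<Sum>i\<in>I. x i ^ 0 * (x i - x b) / node_weight I x i) -
      (\<Sum>i\<in>I. x i ^ 0 * (x i - x a) / node_weight I x i)"
    unfolding power_divdiff_def sum_distrib_left sum_subtractf[symmetric]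
    by (rule sum.cong) (simp_all add: diff_divide_distrib[symmetric])
  also have "\<dots> = power_divdiff 0 (I - {b}) x - power_divdiff 0 (I - {a}) x"
    using \<open>a \<in> I\<close> \<open>b \<in> I\<close> Suc.prems
    by (simp only: power_divdiff_remove_node)
  also have "\<dots> = 0"
    using IH \<open>a \<in> I\<close> \<open>b \<in> I\<close> by simp
  finally show ?case
    using ab Suc.prems \<open>a \<in> I\<close> \<open>b \<in> I\<close> by (auto simp: inj_on_def)
qed

lemma power_divdiff_below_card:
  "finite I \<Longrightarrow> inj_on x I \<Longrightarrow> d < card I \<Longrightarrow>
     power_divdiff d I x = (if d = card I - 1 then 1 else 0)"
proof (induction d arbitrary: I)
  case 0
  then show ?case using power_divdiff_0[of I x "card I - 1"] by simp
next
  case (Suc d)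
  from Suc.prems obtain a where a: "a \<in> I" by fastforce
  have "finite (I - {a})" "inj_on x (I - {a})" "d < card (I - {a})"
    using Suc.prems a by (auto simp: inj_on_diff)
  then show ?case
    using power_divdiff_Suc[OF Suc.prems(1) a Suc.prems(2)] Suc.IH[of "I - {a}"] Suc.IH[of I]
      Suc.prems a by auto
qed

lemma power_divdiff_card:
  "finite I \<Longrightarrow> inj_on x I \<Longrightarrow> I \<noteq> {} \<Longrightarrow> power_divdiff (card I) I x = (\<Sum>i\<in>I. x i)"
proof (induction "card I" arbitrary: I)
  case 0
  then show ?case by simp
next
  case (Suc k)
  from Suc.prems obtain a where a: "a \<in> I" by auto
  show ?case
  proof (cases "k = 0")
    case True
    then have "I = {a}" using Suc.hyps(2) a by (metis card_1_singletonE One_nat_def singletonD)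
    then show ?thesis by (simp add: power_divdiff_def node_weight_def)
  next
    case False
    have cI: "card (I - {a}) = k" using a Suc by simp
    then have "I - {a} \<noteq> {}" using False by (metis card.empty)
    then have "power_divdiff k (I - {a}) x = (\<Sum>i\<in>I - {a}. x i)"
      using Suc.hyps(1)[OF cI[symmetric]] Suc.prems cI by (simp add: inj_on_diff)
    moreover have "power_divdiff k I x = 1"
      using power_divdiff_below_card[OF Suc.prems(1,2), of k] Suc.hyps(2) by simp
    ultimately show ?thesis
      using power_divdiff_Suc[OF Suc.prems(1) a Suc.prems(2), of k] Suc.hyps(2)
        sum.remove[OF Suc.prems(1) a, of x] by simp
  qed
qed

lemma sum_poly_div_node_weight:
  fixes p :: "real poly"
  assumes "finite I" "inj_on x I" "I \<noteq> {}" "degree p \<le> card I"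
  shows "(\<Sum>i\<in>I. poly p (x i) / node_weight I x i) =
    coeff p (card I - 1) + coeff p (card I) * (\<Sum>i\<in>I. x i)"
proof -
  let ?K = "card I"
  have K: "?K = Suc (?K - 1)" using assms by (simp add: card_gt_0_iff)
  have "poly p z = (\<Sum>d\<le>?K. coeff p d * z ^ d)" for z
    unfolding poly_altdef using assms(4)
    by (intro sum.mono_neutral_left) (auto simp: coeff_eq_0)
  then have "(\<Sum>i\<in>I. poly p (x i) / node_weight I x i) = (\<Sum>d\<le>?K. coeff p d * power_divdiff d I x)"
    unfolding power_divdiff_def
    by (simp add: sum_divide_distrib sum_distrib_left sum.swap[of _ I] mult.assoc)
  also have "\<dots> = (\<Sum>d<?K. coeff p d * power_divdiff d I x) + coeff p ?K * power_divdiff ?K I x"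
    by (simp add: lessThan_Suc_atMost[symmetric])
  also have "(\<Sum>d<?K. coeff p d * power_divdiff d I x) = (\<Sum>d<?K. if d = ?K - 1 then coeff p d else 0)"
    by (rule sum.cong) (use assms power_divdiff_below_card[of I x] in auto)
  also have "\<dots> = coeff p (?K - 1)" by (subst K) simp
  finally show ?thesis using power_divdiff_card[OF assms(1-3)] by simp
qed

lemma sum_poly_div_node_weight_extra_node:
  fixes p :: "real poly" and x :: "nat \<Rightarrow> real"
  assumes I: "finite I" "0 \<notin> I" and inj: "inj_on x I" and c: "c \<notin> x ` I"
    and deg: "degree p \<le> card I"
  shows "(\<Sum>i\<in>I. poly p (x i) / ((x i - c) * node_weight I x i)) + poly p c / (\<Prod>m\<in>I. c - x m)
       = coeff p (card I)"
proof -
  define J where "J = insert 0 I"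
  define y where "y = x(0 := c)"
  have J: "finite J" "J \<noteq> {}" "card J = card I + 1" "J - {0} = I"
    using I unfolding J_def by auto
  have y: "inj_on y J" "\<And>i. i \<in> I \<Longrightarrow> y i = x i" "y 0 = c"
    unfolding J_def y_def using inj c I(2) by (auto simp: inj_on_def)
  have w0: "node_weight J y 0 = (\<Prod>m\<in>I. c - x m)"
    unfolding node_weight_def J(4) y(3) using y(2) by simp
  have wi: "node_weight J y i = (x i - c) * node_weight I x i" if "i \<in> I" for i
  proof -
    have "node_weight J y i = (y i - y 0) * node_weight (J - {0}) y i"
      using that I by (intro node_weight_remove) (auto simp: J_def intro!: gr0I)
    also have "J - {0} = I" by (fact J(4))
    also have "node_weight I y i = node_weight I x i"
      unfolding node_weight_def using y(2) that by simp
    finally show ?thesis using y that by simp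
  qed
  have "(\<Sum>i\<in>J. poly p (y i) / node_weight J y i) = coeff p (card I)"
    using sum_poly_div_node_weight[OF J(1) y(1) J(2)] deg J(3) by (simp add: coeff_eq_0)
  moreover have "(\<Sum>i\<in>J. f i) = f 0 + (\<Sum>i\<in>I. f i)" for f :: "nat \<Rightarrow> real"
    unfolding J_def using I by simp
  ultimately show ?thesis using w0 wi y(2,3) by simp
qed

section \<open>Products of linear factors\<close>

definition linear_factors :: "'i set \<Rightarrow> ('i \<Rightarrow> real) \<Rightarrow> real poly" where
  "linear_factors M a = (\<Prod>m\<in>M. [:- a m, 1:])"

lemma poly_linear_factors [simp]: "poly (linear_factors M a) z = (\<Prod>m\<in>M. z - a m)"
  by (simp add: linear_factors_def poly_prod)

lemma linear_factors_insert:
  "finite M \<Longrightarrow> b \<notin> M \<Longrightarrow> linear_factors (insert b M) a = [:- a b, 1:] * linear_factors M a"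
  by (simp add: linear_factors_def)

lemma degree_linear_factors [simp]: "degree (linear_factors M a) = card M"
  unfolding linear_factors_def
  by (cases "finite M") (simp_all add: degree_prod_eq_sum_degree)

lemma coeff_linear_factors_card [simp]: "coeff (linear_factors M a) (card M) = 1"
  using lead_coeff_prod[of "\<lambda>m. [:- a m, 1:]" M] by (simp add: linear_factors_def[symmetric])

lemma coeff_linear_factors_above: "card M < j \<Longrightarrow> coeff (linear_factors M a) j = 0"
  by (simp add: coeff_eq_0)

lemma coeff_linear_mult_0: "coeff ([:- c, 1:] * q) 0 = - c * coeff q 0"
  for c :: real by simp

lemma coeff_linear_mult_Suc: "coeff ([:- c, 1:] * q) (Suc j) = coeff q j - c * coeff q (Suc j)"
  for c :: real by simp

lemma coeff_linear_factors_subtop: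
  "finite M \<Longrightarrow> card M = Suc k \<Longrightarrow> coeff (linear_factors M a) k = - (\<Sum>m\<in>M. a m)"
proof (induction M arbitrary: k rule: finite_induct)
  case empty
  then show ?case by simp
next
  case (insert b M)
  show ?case
  proof (cases k)
    case 0
    then have "M = {}" using insert by simp
    then show ?thesis using 0 by (simp add: linear_factors_def)
  next
    case (Suc k')
    then have "card M = Suc k'" using insert by simp
    then show ?thesis
      using insert Suc coeff_linear_factors_card[of M a]
      by (simp add: linear_factors_insert coeff_linear_mult_Suc)
  qed
qed

abbreviation shift_difference :: "'i set \<Rightarrow> ('i \<Rightarrow> real) \<Rightarrow> real poly" where
  "shift_difference M a \<equiv> linear_factors M (\<lambda>m. a m + 1) - linear_factors M a"

lemma coeff_shift_difference_above: "card M \<le> j \<Longrightarrow> coeff (shift_difference M a) j = 0"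
  by (cases "j = card M") (simp_all add: coeff_linear_factors_above)

lemma coeff_shift_difference_top:
  assumes "finite M" "card M = Suc k"
  shows "coeff (shift_difference M a) k = - real (card M)"
  using assms by (simp add: coeff_linear_factors_subtop sum.distrib)

lemma shift_difference_insert:
  assumes "finite M" "b \<notin> M"
  shows "shift_difference (insert b M) a =
    [:- a b, 1:] * shift_difference M a - linear_factors M (\<lambda>m. a m + 1)"
proof -
  have "[:- (a b + 1), 1:] = [:- a b, 1:] - 1" by (simp add: one_pCons)
  then have "shift_difference (insert b M) a =
      ([:- a b, 1:] - 1) * linear_factors M (\<lambda>m. a m + 1) - [:- a b, 1:] * linear_factors M a"
    unfolding linear_factors_insert[OF assms] by (simp only:)
  then show ?thesis by (simp only: left_diff_distrib right_diff_distrib mult_1)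
qed

lemma coeff_shift_difference_subtop:
  "finite M \<Longrightarrow> card M = Suc (Suc k) \<Longrightarrow>
    coeff (shift_difference M a) k = real (card M - 1) * (\<Sum>m\<in>M. a m) + real (card M) * real (card M - 1) / 2"
proof (induction M arbitrary: k rule: finite_induct)
  case empty
  then show ?case by simp
next
  case (insert b M)
  have M: "card M = Suc k" using insert by simp
  have top: "coeff (linear_factors M (\<lambda>m. a m + 1)) k = - (\<Sum>m\<in>M. a m) - real (card M)"
    using coeff_linear_factors_subtop[OF insert.hyps(1) M] by (simp add: sum.distrib)
  have top': "coeff (shift_difference M a) k = - real (card M)"
    by (rule coeff_shift_difference_top[OF insert.hyps(1) M])
  show ?case
  proof (cases k)
    case 0
    have "coeff (shift_difference (insert b M) a) 0 = real (card M) * a b + (\<Sum>m\<in>M. a m) + real (card M)"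
      using top top' 0 by (simp add: shift_difference_insert[OF insert.hyps] coeff_linear_mult_0)
    then show ?thesis using insert.hyps M 0 by simp
  next
    case (Suc k')
    have "coeff (shift_difference (insert b M) a) k =
        coeff (shift_difference M a) k' + a b * real (card M) + (\<Sum>m\<in>M. a m) + real (card M)"
      using top top' Suc by (simp add: shift_difference_insert[OF insert.hyps] coeff_linear_mult_Suc)
    then show ?thesis
      using insert.IH[of k'] insert.hyps M Suc by (simp add: algebra_simps of_nat_diff)
  qed
qed

section \<open>The Frobenius formula and the effect of moving one box\<close>

definition vandermonde :: "nat \<Rightarrow> (nat \<Rightarrow> real) \<Rightarrow> real" where
  "vandermonde K x = (\<Prod>i\<in>{1..K}. \<Prod>m\<in>{i<..K}. x i - x m)"

lemma vandermonde_nonzero: "inj_on x {1..K} \<Longrightarrow> vandermonde K x \<noteq> 0"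
  unfolding vandermonde_def by (auto dest: inj_onD)

lemma vandermonde_fun_upd:
  assumes j: "j \<in> {1..K}"
  shows "\<exists>A. \<forall>y. vandermonde K (x(j := y)) = A * (\<Prod>m\<in>{1..K} - {j}. y - x m)"
proof -
  define C where "C i = (\<Prod>m\<in>{i<..K} - {j}. x i - x m)" for i
  have "vandermonde K (x(j := y)) = (-1) ^ (j - 1) * (\<Prod>i\<in>{1..K} - {j}. C i) * (\<Prod>m\<in>{1..K} - {j}. y - x m)"
    for y
  proof -
    let ?x = "x(j := y)"
    have row: "(\<Prod>m\<in>{i<..K}. ?x i - ?x m) = (if i < j then x i - y else 1) * C i"
      if i: "i \<in> {1..K} - {j}" for i
    proof (cases "i < j")
      case True
      then have "(\<Prod>m\<in>{i<..K}. ?x i - ?x m) = (x i - y) * (\<Prod>m\<in>{i<..K} - {j}. ?x i - ?x m)"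
        using j by (subst prod.remove[of _ j]) auto
      then show ?thesis using True i unfolding C_def by simp
    next
      case False
      then have "{i<..K} - {j} = {i<..K}" "(\<Prod>m\<in>{i<..K}. ?x i - ?x m) = (\<Prod>m\<in>{i<..K}. x i - x m)"
        using i by (auto intro!: prod.cong)
      then show ?thesis using False unfolding C_def by simp
    qed
    have "vandermonde K ?x = (\<Prod>m\<in>{j<..K}. y - x m) * (\<Prod>i\<in>{1..K} - {j}. \<Prod>m\<in>{i<..K}. ?x i - ?x m)"
      unfolding vandermonde_def using j by (subst prod.remove[of _ j]) auto
    also have "(\<Prod>i\<in>{1..K} - {j}. \<Prod>m\<in>{i<..K}. ?x i - ?x m) =
        (\<Prod>i\<in>{1..K} - {j}. (if i < j then x i - y else 1) * C i)"
      by (rule prod.cong[OF refl row])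
    also have "\<dots> = (\<Prod>i\<in>{1..K} - {j}. if i < j then x i - y else 1) * (\<Prod>i\<in>{1..K} - {j}. C i)"
      by (rule prod.distrib)
    also have "(\<Prod>i\<in>{1..K} - {j}. if i < j then x i - y else 1) = (\<Prod>i\<in>{1..<j}. x i - y)"
      using j by (simp add: prod.If_cases) (intro prod.cong; auto)
    also have "\<dots> = (\<Prod>i\<in>{1..<j}. -1) * (\<Prod>i\<in>{1..<j}. y - x i)"
      by (subst prod.distrib[symmetric]) (rule prod.cong; simp)
    also have "\<dots> = (-1) ^ (j - 1) * (\<Prod>i\<in>{1..<j}. y - x i)"
      by simp
    also have "(\<Prod>m\<in>{1..K} - {j}. y - x m) = (\<Prod>i\<in>{1..<j}. y - x i) * (\<Prod>m\<in>{j<..K}. y - x m)"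
      using j by (subst prod.union_disjoint[symmetric]) (auto intro: prod.cong)
    ultimately show ?thesis by (simp only: mult_ac)
  qed
  then show ?thesis by blast
qed

lemma vandermonde_fun_upd_ratio:
  assumes "j \<in> {1..K}"
  shows "vandermonde K (x(j := y)) * (\<Prod>m\<in>{1..K} - {j}. z - x m) =
    vandermonde K (x(j := z)) * (\<Prod>m\<in>{1..K} - {j}. y - x m)"
  using vandermonde_fun_upd[OF assms, of x] by auto

lemma prod_agree_except_one:
  fixes f g :: "'a \<Rightarrow> 'b::comm_monoid_mult"
  assumes "finite I" "j \<in> I" "\<And>i. i \<in> I - {j} \<Longrightarrow> g i = f i"
  shows "prod g I * f j = prod f I * g j"
proof -
  have "prod g (I - {j}) = prod f (I - {j})" using assms(3) by (rule prod.cong[OF refl])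
  then show ?thesis using assms(1,2) by (simp add: prod.remove[of I j] mult_ac)
qed

lemma sum_agree_except_one:
  fixes f g :: "'a \<Rightarrow> 'b::comm_monoid_add"
  assumes "finite I" "j \<in> I" "\<And>i. i \<in> I - {j} \<Longrightarrow> g i = f i"
  shows "sum g I + f j = sum f I + g j"
proof -
  have "sum g (I - {j}) = sum f (I - {j})" using assms(3) by (rule sum.cong[OF refl])
  then show ?thesis using assms(1,2) by (simp add: sum.remove[of I j] add_ac)
qed

text \<open>For row lengths \<open>v 1 \<ge> \<dots> \<ge> v K\<close> these are the strictly decreasing first-column hook
  lengths \<open>v i + K - i\<close> of the diagram, padded with empty rows to \<open>K\<close> rows.\<close>
definition beta :: "nat \<Rightarrow> (nat \<Rightarrow> nat) \<Rightarrow> nat \<Rightarrow> real" where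
  "beta K v i = real (v i + K - i)"

definition frobenius :: "nat \<Rightarrow> (nat \<Rightarrow> nat) \<Rightarrow> real" where
  "frobenius K v =
     fact (\<Sum>i\<in>{1..K}. v i) * vandermonde K (beta K v) / (\<Prod>i\<in>{1..K}. fact (v i + K - i))"

lemma frobenius_zero_nonzero: "frobenius K (\<lambda>_. 0) \<noteq> 0"
proof -
  have "inj_on (beta K (\<lambda>_. 0)) {1..K}"
    by (auto simp: inj_on_def beta_def)
  then show ?thesis
    unfolding frobenius_def using vandermonde_nonzero by simp
qed

text \<open>For \<open>x = beta K v\<close> and \<open>N = \<Sum>v\<close>, these are the factors by which \<open>frobenius K v\<close> changes
  when a box is removed from row \<open>j\<close>, resp. added to row \<open>i\<close>.\<close>
definition down_ratio :: "nat \<Rightarrow> (nat \<Rightarrow> real) \<Rightarrow> nat \<Rightarrow> nat \<Rightarrow> real" where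
  "down_ratio K x N j = x j * (\<Prod>m\<in>{1..K} - {j}. x j - 1 - x m) / (real N * node_weight {1..K} x j)"

definition up_ratio :: "nat \<Rightarrow> (nat \<Rightarrow> real) \<Rightarrow> nat \<Rightarrow> nat \<Rightarrow> real" where
  "up_ratio K x N i =
     (real N + 1) * (\<Prod>m\<in>{1..K} - {i}. x i + 1 - x m) / ((x i + 1) * node_weight {1..K} x i)"

lemma frobenius_remove_box:
  assumes j: "j \<in> {1..K}" and vj: "1 \<le> v j" and inj: "inj_on (beta K v) {1..K}"
  shows "frobenius K (v(j := v j - 1)) = frobenius K v * down_ratio K (beta K v) (\<Sum>i\<in>{1..K}. v i) j"
proof -
  let ?v = "v(j := v j - 1)"
  define x where "x = beta K v"
  define N where "N = (\<Sum>i\<in>{1..K}. v i)"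
  define w where "w = node_weight {1..K} x j"
  define Q where "Q = (\<Prod>m\<in>{1..K} - {j}. x j - 1 - x m)"
  define V V' where "V = vandermonde K x" and "V' = vandermonde K (x(j := x j - 1))"
  define F F' where "F = (\<Prod>i\<in>{1..K}. fact (v i + K - i) :: real)"
    and "F' = (\<Prod>i\<in>{1..K}. fact (?v i + K - i) :: real)"
  have x': "beta K ?v = x(j := x j - 1)"
    using vj j by (auto simp: beta_def x_def of_nat_diff)
  have N': "(\<Sum>i\<in>{1..K}. ?v i) = N - 1" "1 \<le> N"
    using sum_agree_except_one[of "{1..K}" j ?v v] j vj unfolding N_def by auto
  have "v j + K - j = Suc (v j - 1 + K - j)" using vj j by auto
  then have "(fact (v j + K - j) :: real) = x j * fact (?v j + K - j)"
    by (simp add: x_def beta_def fact_Suc)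
  moreover have "F' * fact (v j + K - j) = F * fact (?v j + K - j)"
    unfolding F_def F'_def using j by (intro prod_agree_except_one) auto
  ultimately have F: "F = F' * x j" by simp
  have V: "V' * w = V * Q"
    using vandermonde_fun_upd_ratio[OF j, of x "x j - 1" "x j"]
    unfolding V_def V'_def w_def Q_def node_weight_def by simp
  have nonzero: "w \<noteq> 0" "x j \<noteq> 0" "F' \<noteq> 0"
    using node_weight_nonzero[of "{1..K}" x j] inj j vj unfolding w_def x_def beta_def F'_def by auto
  with V have V': "V' = V * Q / w" by (simp add: eq_divide_eq)
  have "(fact N :: real) = real N * fact (N - 1)"
    using N'(2) by (simp add: fact_reduce)
  then have "fact (N - 1) * V' / F' = fact N * V / F * (x j * Q / (real N * w))"
    unfolding F V' using nonzero N'(2) by (simp add: field_simps)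
  then show ?thesis
    unfolding frobenius_def down_ratio_def x' N'(1)
    by (simp only: x_def[symmetric] N_def[symmetric] w_def[symmetric] Q_def[symmetric]
        V_def[symmetric] V'_def[symmetric] F_def[symmetric] F'_def[symmetric])
qed

lemma frobenius_add_box:
  assumes i: "i \<in> {1..K}" and inj: "inj_on (beta K v) {1..K}"
  shows "frobenius K (v(i := v i + 1)) = frobenius K v * up_ratio K (beta K v) (\<Sum>i\<in>{1..K}. v i) i"
proof -
  let ?v = "v(i := v i + 1)"
  define x where "x = beta K v"
  define N where "N = (\<Sum>i\<in>{1..K}. v i)"
  define w where "w = node_weight {1..K} x i"
  define Q where "Q = (\<Prod>m\<in>{1..K} - {i}. x i + 1 - x m)"
  define V V' where "V = vandermonde K x" and "V' = vandermonde K (x(i := x i + 1))"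
  define F F' where "F = (\<Prod>i\<in>{1..K}. fact (v i + K - i) :: real)"
    and "F' = (\<Prod>m\<in>{1..K}. fact (?v m + K - m) :: real)"
  have x': "beta K ?v = x(i := x i + 1)"
    using i by (auto simp: beta_def x_def)
  have N': "(\<Sum>i\<in>{1..K}. ?v i) = Suc N"
    using sum_agree_except_one[of "{1..K}" i ?v v] i unfolding N_def by auto
  have "?v i + K - i = Suc (v i + K - i)" using i by auto
  then have "(fact (?v i + K - i) :: real) = (x i + 1) * fact (v i + K - i)"
    by (simp add: x_def beta_def fact_Suc)
  moreover have "F' * fact (v i + K - i) = F * fact (?v i + K - i)"
    unfolding F_def F'_def using i by (intro prod_agree_except_one) auto
  ultimately have F: "F' = F * (x i + 1)" by simp
  have V: "V' * w = V * Q"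
    using vandermonde_fun_upd_ratio[OF i, of x "x i + 1" "x i"]
    unfolding V_def V'_def w_def Q_def node_weight_def by simp
  have nonzero: "w \<noteq> 0" "x i + 1 \<noteq> 0" "F \<noteq> 0"
    using node_weight_nonzero[of "{1..K}" x i] inj i unfolding w_def x_def beta_def F_def by auto
  with V have V': "V' = V * Q / w" by (simp add: eq_divide_eq)
  have "fact (Suc N) * V' / F' = fact N * V / F * ((real N + 1) * Q / ((x i + 1) * w))"
    unfolding F V' using nonzero by (simp add: field_simps fact_Suc)
  then show ?thesis
    unfolding frobenius_def up_ratio_def x' N'
    by (simp only: x_def[symmetric] N_def[symmetric] w_def[symmetric] Q_def[symmetric]
        V_def[symmetric] V'_def[symmetric] F_def[symmetric] F'_def[symmetric])
qed

section \<open>Summation identities for the ratios\<close>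

lemma prod_shifted_self:
  fixes x :: "'i \<Rightarrow> real"
  assumes "finite I" "j \<in> I"
  shows "(\<Prod>m\<in>I. x j - (x m + 1)) = - (\<Prod>m\<in>I - {j}. x j - 1 - x m)"
  using assms by (simp add: prod.remove[of I j] algebra_simps)

text \<open>The branching rule \<open>f\<^sub>\<lambda> = \<Sum>\<^sub>\<mu> f\<^sub>\<mu>\<close> in terms of the ratios.\<close>
lemma sum_down_ratio:
  fixes x :: "nat \<Rightarrow> real"
  assumes K: "1 \<le> K" and inj: "inj_on x {1..K}" and N_pos: "0 < N"
    and N: "real N = (\<Sum>i\<in>{1..K}. x i) - real K * (real K - 1) / 2"
  shows "(\<Sum>j\<in>{1..K}. down_ratio K x N j) = 1"
proof -
  define I where "I = {1..K}"
  define p where "p = pCons 0 (shift_difference I x)"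
  have I: "finite I" "I \<noteq> {}" "card I = K" using K unfolding I_def by auto
  have p_node: "poly p (x j) = - (x j * (\<Prod>m\<in>I - {j}. x j - 1 - x m))" if "j \<in> I" for j
  proof -
    have "(\<Prod>m\<in>I. x j - x m) = 0" using that I(1) by (intro prod_zero) auto
    then show ?thesis using prod_shifted_self[OF I(1) that, of x] by (simp add: p_def)
  qed
  have "degree p \<le> card I"
  proof (rule degree_le, intro allI impI)
    fix j assume "card I < j"
    then obtain j' where "j = Suc j'" "card I \<le> j'" by (cases j) auto
    then show "coeff p j = 0" using coeff_shift_difference_above[of I j' x] by (simp add: p_def)
  qed
  then have "(\<Sum>j\<in>I. poly p (x j) / node_weight I x j) = coeff p (K - 1) + coeff p K * (\<Sum>j\<in>I. x j)"
    using sum_poly_div_node_weight[OF I(1) inj[folded I_def] I(2)] I(3) by simp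
  moreover have "coeff p K = - real K"
    using K I coeff_shift_difference_top[OF I(1), of "K - 1" x] by (cases K) (simp_all add: p_def)
  moreover have "coeff p (K - 1) = real (K - 1) * (\<Sum>j\<in>I. x j) + real K * real (K - 1) / 2"
  proof (cases "K = 1")
    case False
    then have "K - 1 = Suc (K - 2)" "card I = Suc (Suc (K - 2))" using K I by auto
    then show ?thesis using coeff_shift_difference_subtop[OF I(1), of "K - 2" x] I(3) by (simp add: p_def)
  qed (simp add: p_def)
  ultimately have "(\<Sum>j\<in>I. poly p (x j) / node_weight I x j) = - real N"
    using K N by (simp add: I_def of_nat_diff algebra_simps)
  moreover have "(\<Sum>j\<in>I. down_ratio K x N j) = - (\<Sum>j\<in>I. poly p (x j) / node_weight I x j) / real N"
    unfolding sum_divide_distrib sum_negf[symmetric] down_ratio_def I_def[symmetric]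
    by (rule sum.cong) (simp_all add: p_node mult.commute)
  ultimately show ?thesis using N_pos by (simp add: I_def)
qed

lemma up_ratio_last_zero:
  assumes xK: "x K = 0" and i: "i \<in> {1..K}" and xi: "x i + 1 \<noteq> 0"
  shows "up_ratio K x N i = (real N + 1) * (\<Prod>m\<in>{1..<K}. x i + 1 - x m) / node_weight {1..K} x i"
proof -
  have "(\<Prod>m\<in>{1..K} - {i}. x i + 1 - x m) = (x i + 1) * (\<Prod>m\<in>{1..<K}. x i + 1 - x m)"
  proof (cases "i = K")
    case True
    then have "{1..K} - {i} = {1..<K}" by auto
    then show ?thesis using True xK by simp
  next
    case False
    then have "{1..K} - {i} = insert K ({1..<K} - {i})" "{1..<K} = insert i ({1..<K} - {i})"
      using i by auto
    then have "(\<Prod>m\<in>{1..K} - {i}. x i + 1 - x m) = (x i + 1 - x K) * (\<Prod>m\<in>{1..<K} - {i}. x i + 1 - x m)"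
      "(\<Prod>m\<in>{1..<K}. x i + 1 - x m) = (x i + 1 - x i) * (\<Prod>m\<in>{1..<K} - {i}. x i + 1 - x m)"
      by (metis finite_Diff finite_atLeastLessThan prod.insert Diff_iff atLeastLessThan_iff
          insert_iff less_irrefl)+
    then show ?thesis using xK by simp
  qed
  then show ?thesis using xi by (simp add: up_ratio_def)
qed

lemma up_ratio_div_gap_square:
  assumes xK: "x K = 0" and i: "i \<in> {1..K}" "0 \<le> x i" and j: "j \<in> {1..<K}" and gap: "x i + 1 \<noteq> x j"
  shows "up_ratio K x N i / (x i + 1 - x j)\<^sup>2 = (real N + 1) *
    ((\<Prod>m\<in>{1..<K} - {j}. x i + 1 - x m) / ((x i - (x j - 1)) * node_weight {1..K} x i))"
proof -
  have "(\<Prod>m\<in>{1..<K}. x i + 1 - x m) = (x i + 1 - x j) * (\<Prod>m\<in>{1..<K} - {j}. x i + 1 - x m)"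
    using j by (simp add: prod.remove[of _ j])
  then have "up_ratio K x N i =
      (real N + 1) * (x i + 1 - x j) * (\<Prod>m\<in>{1..<K} - {j}. x i + 1 - x m) / node_weight {1..K} x i"
    using up_ratio_last_zero[of x K i N] xK i by simp
  moreover have "x i + 1 - x j \<noteq> 0" "x i - (x j - 1) = x i + 1 - x j" using gap by auto
  ultimately show ?thesis by (simp add: power2_eq_square)
qed

lemma down_ratio_div_gap_square:
  assumes i: "i \<in> {1..K}" and j: "j \<in> {1..K}" and gap: "x j \<noteq> x i + 1"
  shows "down_ratio K x N j / (x i + 1 - x j)\<^sup>2 =
    - (x j * (\<Prod>m\<in>{1..K} - {i}. x j - (x m + 1)) / ((x j - (x i + 1)) * node_weight {1..K} x j)) / real N"
proof -
  define e where "e = x j - (x i + 1)"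
  have "x j * (\<Prod>m\<in>{1..K} - {i}. x j - (x m + 1)) * e = x j * (\<Prod>m\<in>{1..K}. x j - (x m + 1))"
    using i by (simp add: prod.remove[of _ i] e_def)
  then have "down_ratio K x N j =
      - (x j * (\<Prod>m\<in>{1..K} - {i}. x j - (x m + 1)) * e) / (real N * node_weight {1..K} x j)"
    unfolding down_ratio_def prod_shifted_self[OF finite_atLeastAtMost j] by simp
  moreover have "x i + 1 - x j = - e" "e \<noteq> 0" using gap by (auto simp: e_def)
  moreover have "- (a * e) / (b * v) / (- e)\<^sup>2 = - (a / (e * v)) / b" if "e \<noteq> 0" for a b v :: real
    using that by (simp add: power2_eq_square)
  ultimately show ?thesis unfolding e_def by simp
qed

lemma down_ratio_times_sum_up_ratio:
  fixes x :: "nat \<Rightarrow> real"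
  assumes K: "2 \<le> K" and inj: "inj_on x {1..K}" and xK: "x K = 0"
    and nonneg: "\<forall>i\<in>{1..K}. 0 \<le> x i" and j: "j \<in> {1..K}" "j \<noteq> K"
    and gap: "x j - 1 \<notin> x ` {1..K}" and N_pos: "0 < N"
  shows "down_ratio K x N j * (\<Sum>i\<in>{1..K}. up_ratio K x N i / (x i + 1 - x j)\<^sup>2) = (real N + 1) / real N"
proof -
  define I where "I = {1..K}"
  define c where "c = x j - 1"
  define M where "M = {1..<K} - {j}"
  define s where "s = linear_factors M (\<lambda>m. x m - 1)"
  have I: "finite I" "0 \<notin> I" "card I = K" "K \<in> I" "j \<in> I" "inj_on x I" "c \<notin> x ` I"
    using K j inj gap unfolding I_def c_def by auto
  have M: "card M + 2 = K" "I - {j} - {K} = M"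
    using K j unfolding M_def I_def by auto
  have s: "poly s z = (\<Prod>m\<in>M. z + 1 - x m)" for z
    unfolding s_def by (simp add: algebra_simps)
  \<comment> \<open>Every term of the sum is a divided-difference term of \<open>s\<close>, which has degree \<open>K - 2\<close>.\<close>
  have up_term: "up_ratio K x N i / (x i + 1 - x j)\<^sup>2 =
      (real N + 1) * (poly s (x i) / ((x i - c) * node_weight I x i))" if i: "i \<in> I" for i
  proof -
    have gap_i: "x i + 1 \<noteq> x j" using I(7) i unfolding c_def by force
    then show ?thesis
      using up_ratio_div_gap_square[OF xK _ _ _ gap_i, of N] i j nonneg
      unfolding s c_def M_def I_def by simp
  qed
  define P where "P = (\<Prod>m\<in>I - {j}. x j - 1 - x m)"
  have "(\<Sum>i\<in>I. poly s (x i) / ((x i - c) * node_weight I x i)) + poly s c / (\<Prod>m\<in>I. c - x m) = 0"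
    using sum_poly_div_node_weight_extra_node[OF I(1,2,6,7), of s] M(1) I(3)
    by (simp add: s_def coeff_linear_factors_above)
  moreover have "(\<Prod>m\<in>I. c - x m) = - P"
    using I(1,5) by (simp add: prod.remove[of I j] c_def P_def)
  ultimately have S: "(\<Sum>i\<in>I. poly s (x i) / ((x i - c) * node_weight I x i)) = poly s c / P"
    by (simp add: eq_neg_iff_add_eq_0)
  have "(\<Sum>i\<in>I. up_ratio K x N i / (x i + 1 - x j)\<^sup>2) =
      (\<Sum>i\<in>I. (real N + 1) * (poly s (x i) / ((x i - c) * node_weight I x i)))"
    by (rule sum.cong[OF refl up_term])
  also have "\<dots> = (real N + 1) * (poly s c / P)"
    unfolding sum_distrib_left[symmetric] S ..
  finally have sum_up: "(\<Sum>i\<in>{1..K}. up_ratio K x N i / (x i + 1 - x j)\<^sup>2) = (real N + 1) * (poly s c / P)"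
    unfolding I_def .
  have "node_weight I x j = x j * poly s c"
    using I(1,4,5) j(2) xK M(2) by (simp add: node_weight_def prod.remove[of "I - {j}" K] s c_def)
  then have down: "down_ratio K x N j = x j * P / (real N * (x j * poly s c))"
    unfolding down_ratio_def I_def[symmetric] P_def by simp
  have "x j \<noteq> 0" using inj_onD[OF I(6), of j K] I(4,5) j(2) xK by auto
  moreover have "P \<noteq> 0"
    using I(1,7) unfolding c_def P_def by (auto simp: prod_zero_iff)
  moreover have "poly s c \<noteq> 0"
    using node_weight_nonzero[OF I(1,6,5)] \<open>node_weight I x j = x j * poly s c\<close> by simp
  ultimately show ?thesis
    unfolding sum_up down using N_pos by (simp add: field_simps)
qed

lemma up_ratio_plus_sum_down_ratio:
  fixes x :: "nat \<Rightarrow> real"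
  assumes K: "1 \<le> K" and inj: "inj_on x {1..K}" and nonneg: "\<forall>i\<in>{1..K}. 0 \<le> x i"
    and i: "i \<in> {1..K}" and gap: "x i + 1 \<notin> x ` {1..K}" and N_pos: "0 < N"
  shows "up_ratio K x N i / real N + (\<Sum>j\<in>{1..K}. down_ratio K x N j * up_ratio K x N i / (x i + 1 - x j)\<^sup>2) =
    (real N + 1) / real N"
proof -
  define I where "I = {1..K}"
  define c where "c = x i + 1"
  define t where "t = pCons 0 (linear_factors (I - {i}) (\<lambda>m. x m + 1))"
  have I: "finite I" "0 \<notin> I" "card I = K" "i \<in> I" "inj_on x I" "c \<notin> x ` I" "card (I - {i}) + 1 = K"
    using K i inj gap unfolding I_def c_def by auto
  have t: "poly t z = z * (\<Prod>m\<in>I - {i}. z - (x m + 1))" for z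
    unfolding t_def by simp
  \<comment> \<open>Every term of the sum is a divided-difference term of \<open>t\<close>, which is monic of degree \<open>K\<close>.\<close>
  have down_term: "down_ratio K x N j / (x i + 1 - x j)\<^sup>2 =
      - (poly t (x j) / ((x j - c) * node_weight I x j)) / real N" if j: "j \<in> I" for j
  proof -
    have gap_j: "x j \<noteq> x i + 1" using I(6) j unfolding c_def by force
    then show ?thesis
      using down_ratio_div_gap_square[OF i _ gap_j, of N] j unfolding t c_def I_def by simp
  qed
  define Q where "Q = (\<Prod>m\<in>I. c - x m)"
  have "card I = Suc (card (I - {i}))" using I(3,7) by simp
  then have "degree t \<le> card I" "coeff t (card I) = 1"
    by (simp_all add: t_def degree_pCons_eq_if)
  then have S: "(\<Sum>j\<in>I. poly t (x j) / ((x j - c) * node_weight I x j)) = 1 - poly t c / Q"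
    using sum_poly_div_node_weight_extra_node[OF I(1,2,5,6), of t] unfolding Q_def by simp
  have "(\<Sum>j\<in>I. down_ratio K x N j * up_ratio K x N i / (x i + 1 - x j)\<^sup>2) =
      up_ratio K x N i * (\<Sum>j\<in>I. down_ratio K x N j / (x i + 1 - x j)\<^sup>2)"
    by (simp add: sum_distrib_left mult.commute)
  also have "(\<Sum>j\<in>I. down_ratio K x N j / (x i + 1 - x j)\<^sup>2) =
      (\<Sum>j\<in>I. - (poly t (x j) / ((x j - c) * node_weight I x j)) / real N)"
    by (rule sum.cong[OF refl down_term])
  also have "\<dots> = - (1 - poly t c / Q) / real N"
    unfolding S[symmetric] by (simp add: sum_divide_distrib sum_negf)
  finally have sum_down: "(\<Sum>j\<in>{1..K}. down_ratio K x N j * up_ratio K x N i / (x i + 1 - x j)\<^sup>2) =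
      up_ratio K x N i * (- (1 - poly t c / Q) / real N)"
    unfolding I_def .
  have tc: "poly t c = (x i + 1) * node_weight I x i"
    unfolding t c_def node_weight_def by simp
  have "Q = (\<Prod>m\<in>I - {i}. x i + 1 - x m)"
    unfolding Q_def c_def using I(1,4) by (simp add: prod.remove[of I i])
  then have U: "up_ratio K x N i = (real N + 1) * Q / poly t c"
    unfolding up_ratio_def I_def[symmetric] tc by simp
  have "Q \<noteq> 0" using I(1,6) unfolding Q_def by (auto simp: prod_zero_iff)
  moreover have "poly t c \<noteq> 0"
    unfolding tc using nonneg node_weight_nonzero[OF I(1,5,4)] I(4) unfolding I_def by force
  ultimately show ?thesis
    unfolding sum_down unfolding U using N_pos by (simp add: field_simps)
qed

section \<open>Young diagrams described by their row lengths\<close>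

lemma is_partition_finite: "is_partition lam \<Longrightarrow> finite lam"
  unfolding is_partition_def by auto

lemma is_partition_pos: "is_partition lam \<Longrightarrow> (x, y) \<in> lam \<Longrightarrow> 0 < x \<and> 0 < y"
  unfolding is_partition_def by auto

lemma is_partition_downward:
  "is_partition lam \<Longrightarrow> (x, y) \<in> lam \<Longrightarrow> 0 < x' \<Longrightarrow> x' \<le> x \<Longrightarrow> 0 < y' \<Longrightarrow> y' \<le> y \<Longrightarrow> (x', y') \<in> lam"
  unfolding is_partition_def by blast

lemma row_cells_eq:
  assumes P: "is_partition lam" and y: "0 < y"
  shows "{x. (x, y) \<in> lam} = {1..row_len lam y}"
proof -
  define S where "S = {x. (x, y) \<in> lam}"
  have "S \<subseteq> fst ` lam" unfolding S_def by force
  then have fin: "finite S" using is_partition_finite[OF P] finite_surj by blast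
  have Max: "S = {1..Max S}" if "S \<noteq> {}"
  proof
    show "S \<subseteq> {1..Max S}"
    proof
      fix a assume "a \<in> S"
      then show "a \<in> {1..Max S}"
        using fin is_partition_pos[OF P, of a y] unfolding S_def by (simp add: Suc_le_eq)
    qed
    show "{1..Max S} \<subseteq> S"
    proof
      fix a assume "a \<in> {1..Max S}"
      moreover have "Max S \<in> S" using fin that by simp
      ultimately show "a \<in> S" using is_partition_downward[OF P, of "Max S" y a y] y unfolding S_def by auto
    qed
  qed
  have "S = {1..card S}"
  proof (cases "S = {}")
    case False
    then show ?thesis using Max by (metis card_atLeastAtMost diff_Suc_1)
  qed simp
  then show ?thesis unfolding S_def row_len_def .
qed

lemma mem_partition_iff:
  assumes "is_partition lam"
  shows "(x, y) \<in> lam \<longleftrightarrow> 0 < x \<and> 0 < y \<and> x \<le> row_len lam y"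
proof (cases "0 < y")
  case True
  have "(x, y) \<in> lam \<longleftrightarrow> x \<in> {x. (x, y) \<in> lam}" by simp
  then show ?thesis unfolding row_cells_eq[OF assms True] using True by auto
qed (use is_partition_pos[OF assms, of x y] in blast)

lemma row_len_antimono:
  assumes P: "is_partition lam" and "0 < y" "y \<le> y'"
  shows "row_len lam y' \<le> row_len lam y"
proof (cases "row_len lam y' = 0")
  case False
  then have "(row_len lam y', y') \<in> lam" using mem_partition_iff[OF P] assms by auto
  then have "(row_len lam y', y) \<in> lam" using is_partition_downward[OF P] assms False by auto
  then show ?thesis using mem_partition_iff[OF P] by auto
qed simp

lemma row_index_le_card:
  assumes P: "is_partition lam" and "(x, y) \<in> lam"
  shows "y \<le> card lam"
proof -
  have "(\<lambda>t. (1, t)) ` {1..y} \<subseteq> lam"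
    using is_partition_downward[OF P assms(2)] is_partition_pos[OF P assms(2)] by auto
  then have "card ((\<lambda>t. (1::nat, t)) ` {1..y}) \<le> card lam"
    using is_partition_finite[OF P] card_mono by blast
  then show ?thesis by (simp add: card_image inj_on_def)
qed

lemma row_len_beyond:
  assumes P: "is_partition lam" and K: "\<forall>(a, b)\<in>lam. b < K" and y: "K \<le> y"
  shows "row_len lam y = 0"
proof (rule ccontr)
  assume "row_len lam y \<noteq> 0"
  moreover have "{x. (x, 0) \<in> lam} = {}" using is_partition_pos[OF P] by blast
  ultimately have "0 < y" by (cases y) (auto simp: row_len_def)
  with \<open>row_len lam y \<noteq> 0\<close> have "(1, y) \<in> lam" using mem_partition_iff[OF P, of 1 y] by simp
  then show False using K y by auto
qed

lemma card_eq_sum_row_len: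
  assumes P: "is_partition lam" and K: "\<forall>(a, b)\<in>lam. b \<le> K"
  shows "card lam = (\<Sum>y\<in>{1..K}. row_len lam y)"
proof -
  have "lam = (\<lambda>(y, x). (x, y)) ` (SIGMA y:{1..K}. {1..row_len lam y})"
  proof (rule set_eqI)
    fix c :: cell
    obtain a b where c: "c = (a, b)" by (cases c)
    have "(a, b) \<in> lam \<longleftrightarrow> (b, a) \<in> (SIGMA y:{1..K}. {1..row_len lam y})"
      using K mem_partition_iff[OF P, of a b] by auto
    then show "c \<in> lam \<longleftrightarrow> c \<in> (\<lambda>(y, x). (x, y)) ` (SIGMA y:{1..K}. {1..row_len lam y})"
      unfolding c by (auto simp: image_iff)
  qed
  moreover have "inj_on (\<lambda>(y, x). (x, y)) (SIGMA y:{1..K}. {1..row_len lam y})"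
    by (auto simp: inj_on_def)
  ultimately have "card lam = card (SIGMA y:{1..K}. {1..row_len lam y})"
    by (metis card_image)
  then show ?thesis by (simp add: card_SigmaI)
qed

definition addable_rows :: "cell set \<Rightarrow> nat set" where
  "addable_rows lam = {i. 0 < i \<and> (i = 1 \<or> row_len lam i < row_len lam (i - 1))}"

definition removable_rows :: "cell set \<Rightarrow> nat set" where
  "removable_rows lam = {j. 0 < j \<and> 0 < row_len lam j \<and> row_len lam (Suc j) < row_len lam j}"

abbreviation add_cell :: "cell set \<Rightarrow> nat \<Rightarrow> cell" where
  "add_cell lam i \<equiv> (row_len lam i + 1, i)"

abbreviation corner_cell :: "cell set \<Rightarrow> nat \<Rightarrow> cell" where
  "corner_cell lam j \<equiv> (row_len lam j, j)"

lemma add_cell_notin: "is_partition lam \<Longrightarrow> add_cell lam i \<notin> lam"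
  by (simp add: mem_partition_iff)

lemma corner_cell_in: "is_partition lam \<Longrightarrow> j \<in> removable_rows lam \<Longrightarrow> corner_cell lam j \<in> lam"
  by (simp add: mem_partition_iff removable_rows_def)

lemma is_partition_insert_add_cell:
  assumes P: "is_partition lam" and i: "i \<in> addable_rows lam"
  shows "is_partition (insert (add_cell lam i) lam)"
  unfolding is_partition_def
proof (intro conjI)
  show "finite (insert (add_cell lam i) lam)" using is_partition_finite[OF P] by simp
  show "\<forall>(x, y)\<in>insert (add_cell lam i) lam. 0 < x \<and> 0 < y"
    using is_partition_pos[OF P] i by (auto simp: addable_rows_def)
  have "(x', y') \<in> insert (add_cell lam i) lam"
    if c: "(x, y) \<in> insert (add_cell lam i) lam" and h: "0 < x'" "x' \<le> x" "0 < y'" "y' \<le> y"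
    for x y x' y'
  proof (cases "(x, y) \<in> lam")
    case True
    then show ?thesis using is_partition_downward[OF P _ h] by auto
  next
    case False
    then have xy: "x = row_len lam i + 1" "y = i" using c by auto
    show ?thesis
    proof (cases "y' = i")
      case True
      then show ?thesis using h xy mem_partition_iff[OF P, of x' i] by auto
    next
      case False
      then have "y' < i" "i \<noteq> 1" using h xy by auto
      then have "row_len lam i < row_len lam (i - 1)" "row_len lam (i - 1) \<le> row_len lam y'"
        using i h by (auto simp: addable_rows_def intro: row_len_antimono[OF P])
      then show ?thesis using h xy by (simp add: mem_partition_iff[OF P])
    qed
  qed
  then show "\<forall>(x, y)\<in>insert (add_cell lam i) lam. \<forall>x' y'. 0 < x' \<and> x' \<le> x \<and> 0 < y' \<and> y' \<le> y \<longrightarrow>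
      (x', y') \<in> insert (add_cell lam i) lam"
    by blast
qed

lemma is_partition_remove_corner_cell:
  assumes P: "is_partition lam" and j: "j \<in> removable_rows lam"
  shows "is_partition (lam - {corner_cell lam j})"
proof -
  have "(x', y') \<noteq> corner_cell lam j"
    if c: "(x, y) \<in> lam - {corner_cell lam j}" and h: "0 < x'" "x' \<le> x" "0 < y'" "y' \<le> y"
    for x y x' y'
  proof
    assume e: "(x', y') = corner_cell lam j"
    have "x \<le> row_len lam y" using mem_partition_iff[OF P] c by auto
    moreover have "row_len lam y \<le> row_len lam (Suc j)" if "y \<noteq> j"
      using that e h by (intro row_len_antimono[OF P]) auto
    ultimately show False using e h c j by (cases "y = j") (auto simp: removable_rows_def)
  qed
  then show ?thesis
    using is_partition_finite[OF P] is_partition_pos[OF P] is_partition_downward[OF P]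
    unfolding is_partition_def by blast
qed

lemma up_set_eq_image:
  assumes P: "is_partition lam"
  shows "up_set lam = (\<lambda>i. insert (add_cell lam i) lam) ` addable_rows lam"
proof
  show "(\<lambda>i. insert (add_cell lam i) lam) ` addable_rows lam \<subseteq> up_set lam"
  proof
    fix nu assume "nu \<in> (\<lambda>i. insert (add_cell lam i) lam) ` addable_rows lam"
    then obtain i where i: "i \<in> addable_rows lam" "nu = insert (add_cell lam i) lam" by auto
    then have "nu - lam = {add_cell lam i}" using add_cell_notin[OF P] by auto
    then show "nu \<in> up_set lam" unfolding up_set_def using is_partition_insert_add_cell[OF P i(1)] i(2) by auto
  qed
  show "up_set lam \<subseteq> (\<lambda>i. insert (add_cell lam i) lam) ` addable_rows lam"
  proof
    fix nu assume nu: "nu \<in> up_set lam"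
    then have Pn: "is_partition nu" and "lam \<subseteq> nu" "card (nu - lam) = 1"
      unfolding up_set_def by auto
    then obtain a b where "nu - lam = {(a, b)}" by (metis card_1_singletonE surj_pair)
    then have nu_eq: "nu = insert (a, b) lam" and ab: "(a, b) \<in> nu" "(a, b) \<notin> lam"
      using \<open>lam \<subseteq> nu\<close> by auto
    have pos: "0 < a" "0 < b" using is_partition_pos[OF Pn ab(1)] by auto
    have left: "(a - 1, b) \<in> lam" if "a \<noteq> 1"
      using is_partition_downward[OF Pn ab(1), of "a - 1" b] pos that nu_eq by auto
    have above: "(a, b - 1) \<in> lam" if "b \<noteq> 1"
      using is_partition_downward[OF Pn ab(1), of a "b - 1"] pos that nu_eq by auto
    have a: "a = row_len lam b + 1"
    proof (cases "a = 1")
      case True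
      then show ?thesis using ab(2) pos by (simp add: mem_partition_iff[OF P])
    next
      case False
      then show ?thesis using left ab(2) pos by (simp add: mem_partition_iff[OF P])
    qed
    have "b \<in> addable_rows lam"
    proof (cases "b = 1")
      case False
      then show ?thesis using above pos a by (simp add: addable_rows_def mem_partition_iff[OF P])
    qed (simp add: addable_rows_def)
    then show "nu \<in> (\<lambda>i. insert (add_cell lam i) lam) ` addable_rows lam"
      using nu_eq a by auto
  qed
qed

lemma inj_on_insert_add_cell:
  "is_partition lam \<Longrightarrow> inj_on (\<lambda>i. insert (add_cell lam i) lam) A"
proof (rule inj_onI)
  fix i i' assume P: "is_partition lam" and "insert (add_cell lam i) lam = insert (add_cell lam i') lam"
  then have "add_cell lam i = add_cell lam i'" using add_cell_notin[OF P, of i] by blast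
  then show "i = i'" by simp
qed

lemma down_set_eq_image:
  assumes P: "is_partition lam"
  shows "down_set lam = (\<lambda>j. lam - {corner_cell lam j}) ` removable_rows lam"
proof
  show "(\<lambda>j. lam - {corner_cell lam j}) ` removable_rows lam \<subseteq> down_set lam"
    using is_partition_remove_corner_cell[OF P] corner_cell_in[OF P]
    by (auto simp: down_set_def Diff_Diff_Int)
  show "down_set lam \<subseteq> (\<lambda>j. lam - {corner_cell lam j}) ` removable_rows lam"
  proof
    fix mu assume mu: "mu \<in> down_set lam"
    then have Pm: "is_partition mu" and "mu \<subseteq> lam" "card (lam - mu) = 1"
      unfolding down_set_def by auto
    then obtain a b where mu_eq: "mu = lam - {(a, b)}" and ab: "(a, b) \<in> lam" "(a, b) \<notin> mu"
      by (metis card_1_singletonE Diff_Diff_Int Diff_iff inf.absorb2 insertI1 surj_pair)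
    have pos: "0 < a" "0 < b" "a \<le> row_len lam b" using mem_partition_iff[OF P] ab(1) by auto
    have a: "a = row_len lam b"
    proof (rule ccontr)
      assume "a \<noteq> row_len lam b"
      then have "(a + 1, b) \<in> mu" using pos mu_eq mem_partition_iff[OF P, of "a + 1" b] by auto
      then show False using is_partition_downward[OF Pm, of "a + 1" b a b] pos ab(2) by auto
    qed
    have "row_len lam (Suc b) < row_len lam b"
    proof (rule ccontr)
      assume "\<not> row_len lam (Suc b) < row_len lam b"
      then have "(a, Suc b) \<in> mu" using pos a mu_eq mem_partition_iff[OF P, of a "Suc b"] by auto
      then show False using is_partition_downward[OF Pm, of a "Suc b" a b] pos ab(2) by auto
    qed
    then have "b \<in> removable_rows lam" using pos a by (simp add: removable_rows_def)
    then show "mu \<in> (\<lambda>j. lam - {corner_cell lam j}) ` removable_rows lam"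
      using mu_eq a by auto
  qed
qed

lemma inj_on_remove_corner_cell:
  "is_partition lam \<Longrightarrow> inj_on (\<lambda>j. lam - {corner_cell lam j}) (removable_rows lam)"
proof (rule inj_onI)
  fix j j' assume P: "is_partition lam" and j: "j \<in> removable_rows lam"
    and "lam - {corner_cell lam j} = lam - {corner_cell lam j'}"
  then have "corner_cell lam j = corner_cell lam j'" using corner_cell_in[OF P j] by blast
  then show "j = j'" by simp
qed

lemma row_len_insert_add_cell:
  assumes P: "is_partition lam" and i: "i \<in> addable_rows lam"
  shows "row_len (insert (add_cell lam i) lam) = (row_len lam)(i := row_len lam i + 1)"
proof
  fix y
  have "0 < i" using i by (simp add: addable_rows_def)
  then have "{x. (x, i) \<in> insert (add_cell lam i) lam} = insert (row_len lam i + 1) {1..row_len lam i}"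
    using row_cells_eq[OF P] by auto
  then show "row_len (insert (add_cell lam i) lam) y = ((row_len lam)(i := row_len lam i + 1)) y"
    by (cases "y = i") (simp_all add: row_len_def)
qed

lemma row_len_remove_corner_cell:
  assumes P: "is_partition lam" and j: "j \<in> removable_rows lam"
  shows "row_len (lam - {corner_cell lam j}) = (row_len lam)(j := row_len lam j - 1)"
proof
  fix y
  have "0 < j" using j by (simp add: removable_rows_def)
  then have "{x. (x, j) \<in> lam - {corner_cell lam j}} = {1..row_len lam j} - {row_len lam j}"
    using row_cells_eq[OF P] by auto
  then show "row_len (lam - {corner_cell lam j}) y = ((row_len lam)(j := row_len lam j - 1)) y"
    using j by (cases "y = j") (simp_all add: row_len_def removable_rows_def)
qed

lemma beta_row_len_strict:
  assumes P: "is_partition lam" and "i \<in> {1..K}" "i' \<in> {1..K}" "i < i'"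
  shows "beta K (row_len lam) i' < beta K (row_len lam) i"
  using row_len_antimono[OF P, of i i'] assms by (auto simp: beta_def)

lemma inj_on_beta_row_len:
  assumes P: "is_partition lam"
  shows "inj_on (beta K (row_len lam)) {1..K}"
  by (rule inj_onI) (metis beta_row_len_strict[OF P] less_irrefl nat_neq_iff)

lemma sum_beta: "(\<Sum>i\<in>{1..K}. beta K v i) = real (\<Sum>i\<in>{1..K}. v i) + real K * (real K - 1) / 2"
proof (induction K)
  case (Suc K)
  have "(\<Sum>i\<in>{1..Suc K}. beta (Suc K) v i) = (\<Sum>i\<in>{1..K}. beta K v i + 1) + real (v (Suc K))"
    by (simp add: beta_def Suc_diff_le algebra_simps)
  then show ?case using Suc.IH by (simp add: sum.distrib field_simps)
qed (simp add: beta_def)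

lemma removable_rows_subset:
  assumes P: "is_partition lam" and K: "\<forall>(a, b)\<in>lam. b < K"
  shows "removable_rows lam \<subseteq> {1..<K}"
proof
  fix j assume "j \<in> removable_rows lam"
  then have "0 < j" "0 < row_len lam j" by (auto simp: removable_rows_def)
  then show "j \<in> {1..<K}" using row_len_beyond[OF P K, of j] by (cases "K \<le> j") auto
qed

lemma addable_rows_subset:
  assumes P: "is_partition lam"
  shows "addable_rows lam \<subseteq> {1..card lam + 1}"
proof
  fix i assume i: "i \<in> addable_rows lam"
  show "i \<in> {1..card lam + 1}"
  proof (cases "i = 1")
    case False
    then have "(1, i - 1) \<in> lam"
      using i by (auto simp: addable_rows_def mem_partition_iff[OF P])
    then show ?thesis using row_index_le_card[OF P] i by (force simp: addable_rows_def)
  qed simp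
qed

lemma down_ratio_not_removable:
  assumes P: "is_partition lam" and K: "\<forall>(a, b)\<in>lam. b < K"
    and j: "j \<in> {1..K}" "j \<notin> removable_rows lam"
  shows "down_ratio K (beta K (row_len lam)) N j = 0"
proof -
  let ?v = "row_len lam" and ?x = "beta K (row_len lam)"
  have "?x j * (\<Prod>m\<in>{1..K} - {j}. ?x j - 1 - ?x m) = 0"
  proof (cases "j = K")
    case True
    then show ?thesis using row_len_beyond[OF P K] by (simp add: beta_def)
  next
    case False
    \<comment> \<open>Row \<open>j + 1\<close> is as long as row \<open>j\<close>, so the factor \<open>m = j + 1\<close> vanishes.\<close>
    have "?v (Suc j) \<le> ?v j" using j by (intro row_len_antimono[OF P]) auto
    then have "?v (Suc j) = ?v j" using j by (auto simp: removable_rows_def)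
    then have "?x j - 1 - ?x (Suc j) = 0" using j False by (auto simp: beta_def of_nat_diff)
    moreover have "Suc j \<in> {1..K} - {j}" using j False by auto
    ultimately show ?thesis by (metis finite_Diff finite_atLeastAtMost mult_zero_right prod_zero)
  qed
  then show ?thesis by (simp add: down_ratio_def)
qed

lemma up_ratio_not_addable:
  assumes P: "is_partition lam" and i: "i \<in> {1..K}" "i \<notin> addable_rows lam"
  shows "up_ratio K (beta K (row_len lam)) N i = 0"
proof -
  let ?v = "row_len lam" and ?x = "beta K (row_len lam)"
  \<comment> \<open>Row \<open>i - 1\<close> is as long as row \<open>i\<close>, so the factor \<open>m = i - 1\<close> vanishes.\<close>
  have "i \<noteq> 1" "\<not> ?v i < ?v (i - 1)" using i by (auto simp: addable_rows_def)
  moreover have "?v i \<le> ?v (i - 1)" using i \<open>i \<noteq> 1\<close> by (intro row_len_antimono[OF P]) auto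
  ultimately have "?x i + 1 - ?x (i - 1) = 0" "i - 1 \<in> {1..K} - {i}"
    using i by (auto simp: beta_def of_nat_diff)
  then have "(\<Prod>m\<in>{1..K} - {i}. ?x i + 1 - ?x m) = 0"
    by (metis finite_Diff finite_atLeastAtMost prod_zero)
  then show ?thesis by (simp add: up_ratio_def)
qed

lemma beta_minus_one_notin:
  assumes P: "is_partition lam" and j: "j \<in> removable_rows lam" "j \<in> {1..K}"
  shows "beta K (row_len lam) j - 1 \<notin> beta K (row_len lam) ` {1..K}"
proof
  let ?v = "row_len lam"
  assume "beta K ?v j - 1 \<in> beta K ?v ` {1..K}"
  then obtain m where m: "m \<in> {1..K}" "?v m + (K - m) + 1 = ?v j + (K - j)"
    using j by (auto simp: beta_def of_nat_diff)
  show False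
  proof (cases "m \<le> j")
    case True
    then show False using row_len_antimono[OF P, of m j] m by auto
  next
    case False
    then show False using row_len_antimono[OF P, of "Suc j" m] m j by (auto simp: removable_rows_def)
  qed
qed

lemma beta_plus_one_notin:
  assumes P: "is_partition lam" and i: "i \<in> addable_rows lam" "i \<in> {1..K}"
  shows "beta K (row_len lam) i + 1 \<notin> beta K (row_len lam) ` {1..K}"
proof
  let ?v = "row_len lam"
  assume "beta K ?v i + 1 \<in> beta K ?v ` {1..K}"
  then obtain m where m: "m \<in> {1..K}" "?v m + (K - m) = ?v i + (K - i) + 1"
    using i by (auto simp: beta_def of_nat_diff)
  show False
  proof (cases "i \<le> m")
    case True
    then show False using row_len_antimono[OF P, of i m] m i by (auto simp: addable_rows_def)
  next
    case False
    then have "i \<noteq> 1" "m \<le> i - 1" using m by auto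
    then show False using row_len_antimono[OF P, of m "i - 1"] m i by (auto simp: addable_rows_def)
  qed
qed

lemma col_cells_eq:
  assumes "is_partition lam" "0 < x"
  shows "{y. (x, y) \<in> lam} = {y. 0 < y \<and> x \<le> row_len lam y}"
  using mem_partition_iff[OF assms(1)] assms(2) by auto

lemma col_len_corner_cell:
  assumes P: "is_partition lam" and j: "j \<in> removable_rows lam"
  shows "col_len lam (row_len lam j) = j"
proof -
  have j': "0 < j" "0 < row_len lam j" "row_len lam (Suc j) < row_len lam j"
    using j by (auto simp: removable_rows_def)
  have "{y. 0 < y \<and> row_len lam j \<le> row_len lam y} = {1..j}"
  proof (intro set_eqI iffI)
    fix y assume y: "y \<in> {y. 0 < y \<and> row_len lam j \<le> row_len lam y}"
    have "y \<le> j"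
    proof (rule ccontr)
      assume "\<not> y \<le> j"
      then have "row_len lam y \<le> row_len lam (Suc j)" by (intro row_len_antimono[OF P]) auto
      then show False using y j' by auto
    qed
    then show "y \<in> {1..j}" using y by auto
  qed (use row_len_antimono[OF P] in auto)
  then show ?thesis unfolding col_len_def col_cells_eq[OF P j'(2)] by simp
qed

lemma col_len_add_cell:
  assumes P: "is_partition lam" and i: "i \<in> addable_rows lam"
  shows "col_len lam (row_len lam i + 1) = i - 1"
proof -
  have i': "0 < i" "i = 1 \<or> row_len lam i < row_len lam (i - 1)"
    using i by (auto simp: addable_rows_def)
  have "{y. 0 < y \<and> row_len lam i + 1 \<le> row_len lam y} = {1..i - 1}"
  proof (intro set_eqI iffI)
    fix y assume y: "y \<in> {y. 0 < y \<and> row_len lam i + 1 \<le> row_len lam y}"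
    have "y < i"
    proof (rule ccontr)
      assume "\<not> y < i"
      then have "row_len lam y \<le> row_len lam i" by (intro row_len_antimono[OF P]) (use i' in auto)
      then show False using y by auto
    qed
    then show "y \<in> {1..i - 1}" using y by auto
  next
    fix y assume y: "y \<in> {1..i - 1}"
    then have "row_len lam i < row_len lam (i - 1)" using i' by auto
    moreover have "row_len lam (i - 1) \<le> row_len lam y" using y by (intro row_len_antimono[OF P]) auto
    ultimately show "y \<in> {y. 0 < y \<and> row_len lam i + 1 \<le> row_len lam y}" using y by auto
  qed
  moreover have "{y. (row_len lam i + 1, y) \<in> lam} = {y. 0 < y \<and> row_len lam i + 1 \<le> row_len lam y}"
    by (rule col_cells_eq[OF P]) simp
  ultimately show ?thesis unfolding col_len_def by simp
qed

lemma c_cell_add_remove: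
  assumes P: "is_partition lam" and j: "j \<in> removable_rows lam"
  shows "c_cell lam (lam - {corner_cell lam j}) (insert (add_cell lam i) lam) =
    (if (row_len lam j, i) \<in> lam then (row_len lam j, i) else (row_len lam i + 1, j))"
proof -
  have "insert (add_cell lam i) lam - lam = {add_cell lam i}" using add_cell_notin[OF P] by auto
  moreover have "lam - (lam - {corner_cell lam j}) = {corner_cell lam j}" using corner_cell_in[OF P j] by auto
  ultimately show ?thesis unfolding c_cell_def by simp
qed

lemma hook_c_cell_sq:
  assumes P: "is_partition lam" and i: "i \<in> addable_rows lam" and j: "j \<in> removable_rows lam"
    and iK: "i \<le> K" and jK: "j \<le> K"
  shows "(real (hook lam (c_cell lam (lam - {corner_cell lam j}) (insert (add_cell lam i) lam))))\<^sup>2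
       = (beta K (row_len lam) i + 1 - beta K (row_len lam) j)\<^sup>2"
proof -
  let ?r = "row_len lam"
  have i': "0 < i" using i by (auto simp: addable_rows_def)
  have j': "0 < j" "0 < ?r j" "?r (Suc j) < ?r j" using j by (auto simp: removable_rows_def)
  have x: "beta K ?r i + 1 - beta K ?r j = real (?r i) - real (?r j) + real j - real i + 1"
    using iK jK by (simp add: beta_def of_nat_diff)
  show ?thesis
  proof (cases "i \<le> j")
    case True
    have "?r j \<le> ?r i" by (rule row_len_antimono[OF P i' True])
    then have "(?r j, i) \<in> lam" using mem_partition_iff[OF P] i' j' by auto
    moreover have "hook lam (?r j, i) = (?r i - ?r j) + (j - i) + 1"
      unfolding hook_def using col_len_corner_cell[OF P j] by simp
    ultimately show ?thesis
      unfolding c_cell_add_remove[OF P j] x using \<open>?r j \<le> ?r i\<close> True by (simp add: of_nat_diff)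
  next
    case False
    have "?r i \<le> ?r (Suc j)" using False by (intro row_len_antimono[OF P]) auto
    then have "?r i < ?r j" using j' by simp
    then have "(?r j, i) \<notin> lam" using mem_partition_iff[OF P] by auto
    moreover have "hook lam (?r i + 1, j) = (?r j - (?r i + 1)) + ((i - 1) - j) + 1"
      unfolding hook_def using col_len_add_cell[OF P i] by simp
    then have "real (hook lam (?r i + 1, j)) = - (beta K ?r i + 1 - beta K ?r j)"
      unfolding x using \<open>?r i < ?r j\<close> False by (simp add: of_nat_diff)
    ultimately show ?thesis
      unfolding c_cell_add_remove[OF P j] by (simp add: power2_commute)
  qed
qed

section \<open>The branching rule for standard Young tableaux\<close>

lemma num_syt_empty: "num_syt {} = 1"
proof -
  have "syt {} = {\<lambda>_. undefined}"
    unfolding syt_def by (auto simp: bij_betw_def)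
  then show ?thesis unfolding num_syt_def by simp
qed

lemma finite_syt: "finite lam \<Longrightarrow> finite (syt lam)"
  by (rule finite_subset[of _ "lam \<rightarrow>\<^sub>E {1..card lam}"]) (auto simp: syt_def finite_PiE)

lemma syt_image: "T \<in> syt lam \<Longrightarrow> T ` lam = {1..card lam}"
  by (simp add: syt_def bij_betw_def)

lemma syt_inj_on: "T \<in> syt lam \<Longrightarrow> inj_on T lam"
  by (simp add: syt_def bij_betw_def)

lemma syt_extensional: "T \<in> syt lam \<Longrightarrow> d \<notin> lam \<Longrightarrow> T d = undefined"
  unfolding syt_def by (blast intro: PiE_arb)

lemma syt_increasing:
  "T \<in> syt lam \<Longrightarrow> d \<in> lam \<Longrightarrow> e \<in> lam \<Longrightarrow> fst d \<le> fst e \<Longrightarrow> snd d \<le> snd e \<Longrightarrow> d \<noteq> e \<Longrightarrow> T d < T e"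
  by (simp add: syt_def)

lemma syt_memI:
  assumes "inj_on T lam" "T ` lam = {1..card lam}" "\<And>d. d \<notin> lam \<Longrightarrow> T d = undefined"
    and "\<And>d e. d \<in> lam \<Longrightarrow> e \<in> lam \<Longrightarrow> fst d \<le> fst e \<Longrightarrow> snd d \<le> snd e \<Longrightarrow> d \<noteq> e \<Longrightarrow> T d < T e"
  shows "T \<in> syt lam"
  using assms unfolding syt_def bij_betw_def by (auto simp: PiE_iff extensional_def)

lemma syt_max_cell_removable:
  assumes P: "is_partition lam" and T: "T \<in> syt lam" and c: "c \<in> lam" "T c = card lam"
  shows "is_partition (lam - {c})"
proof -
  have "(x', y') \<noteq> c"
    if xy: "(x, y) \<in> lam - {c}" and h: "0 < x'" "x' \<le> x" "0 < y'" "y' \<le> y" for x y x' y'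
  proof
    assume e: "(x', y') = c"
    have "(x, y) \<in> lam" "c \<noteq> (x, y)" "fst c \<le> fst (x, y)" "snd c \<le> snd (x, y)"
      using xy h e by auto
    then have "T c < T (x, y)" using syt_increasing[OF T c(1)] by blast
    moreover have "T (x, y) \<le> card lam" using syt_image[OF T] xy by auto
    ultimately show False using c(2) by simp
  qed
  then show ?thesis
    using is_partition_finite[OF P] is_partition_pos[OF P] is_partition_downward[OF P]
    unfolding is_partition_def by blast
qed

lemma syt_restrict:
  assumes fin: "finite lam" and T: "T \<in> syt lam" and c: "c \<in> lam" "T c = card lam"
  shows "restrict T (lam - {c}) \<in> syt (lam - {c})"
proof (rule syt_memI)
  have "T ` (lam - {c}) = T ` lam - T ` {c}"
    using syt_inj_on[OF T] c by (intro inj_on_image_set_diff) auto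
  then show "restrict T (lam - {c}) ` (lam - {c}) = {1..card (lam - {c})}"
    using syt_image[OF T] c fin by auto
  show "inj_on (restrict T (lam - {c})) (lam - {c})"
    using inj_on_subset[OF syt_inj_on[OF T]] by (auto simp: inj_on_def)
qed (use syt_increasing[OF T] in auto)

lemma syt_extend:
  assumes fin: "finite lam" and c: "c \<in> lam" "0 < fst c" "0 < snd c"
    and PA: "is_partition (lam - {c})" and T: "T \<in> syt (lam - {c})"
  shows "T(c := card lam) \<in> syt lam"
proof (rule syt_memI)
  let ?T = "T(c := card lam)"
  have n: "card (lam - {c}) = card lam - 1" "0 < card lam" using fin c by (auto simp: card_gt_0_iff)
  have lam: "lam = insert c (lam - {c})" using c by auto
  have T_rest: "?T ` (lam - {c}) = {1..card lam - 1}"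
    using syt_image[OF T] n by auto
  have "?T ` lam = insert (?T c) (?T ` (lam - {c}))"
    by (metis lam image_insert)
  then show "?T ` lam = {1..card lam}"
    using T_rest n by auto
  have "inj_on ?T (lam - {c})" using syt_inj_on[OF T] by (auto simp: inj_on_def)
  moreover have "?T c \<notin> ?T ` (lam - {c})" using T_rest n by simp
  ultimately have "inj_on ?T (insert c (lam - {c}))" by (auto simp only: inj_on_insert Diff_idemp)
  then show "inj_on ?T lam" using c(1) by (simp add: insert_absorb)
  show "?T d = undefined" if "d \<notin> lam" for d
    using syt_extensional[OF T] that c by auto
  show "?T d < ?T e"
    if de: "d \<in> lam" "e \<in> lam" "fst d \<le> fst e" "snd d \<le> snd e" "d \<noteq> e" for d e
  proof -
    \<comment> \<open>\<open>c\<close> cannot lie weakly north-west of another cell, as \<open>lam - {c}\<close> is closed downwards.\<close>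
    have "d \<noteq> c"
    proof
      assume "d = c"
      then have "e \<in> lam - {c}" using de by auto
      then have "c \<in> lam - {c}"
        using is_partition_downward[OF PA, of "fst e" "snd e" "fst c" "snd c"] c de \<open>d = c\<close> by auto
      then show False by simp
    qed
    show ?thesis
    proof (cases "e = c")
      case True
      then have "?T d \<in> {1..card lam - 1}" using T_rest de \<open>d \<noteq> c\<close> by blast
      then show ?thesis using True n by auto
    next
      case False
      then show ?thesis using de \<open>d \<noteq> c\<close> syt_increasing[OF T, of d e] by auto
    qed
  qed
qed

lemma bij_betw_syt_restrict:
  assumes P: "is_partition lam" and c: "c \<in> lam" and PA: "is_partition (lam - {c})"
  shows "bij_betw (\<lambda>T. restrict T (lam - {c})) {T \<in> syt lam. T c = card lam} (syt (lam - {c}))"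
proof (rule bij_betw_byWitness[where f' = "\<lambda>T. T(c := card lam)"])
  have fin: "finite lam" and pos: "0 < fst c" "0 < snd c"
    using is_partition_finite[OF P] is_partition_pos[OF P, of "fst c" "snd c"] c by auto
  show "\<forall>T\<in>{T \<in> syt lam. T c = card lam}. (restrict T (lam - {c}))(c := card lam) = T"
    by (auto simp: fun_eq_iff syt_extensional)
  show "\<forall>T\<in>syt (lam - {c}). restrict (T(c := card lam)) (lam - {c}) = T"
    using syt_extensional by (fastforce simp: fun_eq_iff)
  show "(\<lambda>T. restrict T (lam - {c})) ` {T \<in> syt lam. T c = card lam} \<subseteq> syt (lam - {c})"
    using syt_restrict[OF fin _ c] by auto
  show "(\<lambda>T. T(c := card lam)) ` syt (lam - {c}) \<subseteq> {T \<in> syt lam. T c = card lam}"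
    using syt_extend[OF fin c pos PA] by auto
qed

lemma down_set_eq_image_remove:
  "down_set lam = (\<lambda>c. lam - {c}) ` {c \<in> lam. is_partition (lam - {c})}"
proof
  show "down_set lam \<subseteq> (\<lambda>c. lam - {c}) ` {c \<in> lam. is_partition (lam - {c})}"
  proof
    fix mu assume "mu \<in> down_set lam"
    then have "is_partition mu" "mu \<subseteq> lam" "card (lam - mu) = 1"
      unfolding down_set_def by auto
    moreover obtain c where "lam - mu = {c}" using \<open>card (lam - mu) = 1\<close> card_1_singletonE by blast
    ultimately have "mu = lam - {c}" "c \<in> lam" by auto
    with \<open>is_partition mu\<close> show "mu \<in> (\<lambda>c. lam - {c}) ` {c \<in> lam. is_partition (lam - {c})}" by auto
  qed
qed (auto simp: down_set_def Diff_Diff_Int Int_absorb1)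

lemma num_syt_branching:
  assumes P: "is_partition lam" and ne: "lam \<noteq> {}"
  shows "num_syt lam = (\<Sum>mu\<in>down_set lam. num_syt mu)"
proof -
  define C where "C = {c \<in> lam. is_partition (lam - {c})}"
  define S where "S c = {T \<in> syt lam. T c = card lam}" for c
  have fin: "finite lam" using is_partition_finite[OF P] .
  have union: "syt lam = (\<Union>c\<in>C. S c)"
  proof
    show "syt lam \<subseteq> (\<Union>c\<in>C. S c)"
    proof
      fix T assume T: "T \<in> syt lam"
      have "card lam \<in> T ` lam" using syt_image[OF T] fin ne by (simp add: Suc_leI card_gt_0_iff)
      then obtain c where c: "c \<in> lam" "T c = card lam" by auto
      then have "c \<in> C" using syt_max_cell_removable[OF P T] unfolding C_def by auto
      then show "T \<in> (\<Union>c\<in>C. S c)" using T c unfolding S_def by auto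
    qed
  qed (auto simp: S_def)
  have disjoint: "S c \<inter> S c' = {}" if "c \<in> C" "c' \<in> C" "c \<noteq> c'" for c c'
  proof -
    have "c = c'" if "T \<in> S c" "T \<in> S c'" for T
      using that \<open>c \<in> C\<close> \<open>c' \<in> C\<close> inj_onD[OF syt_inj_on, of T lam c c'] unfolding S_def C_def by auto
    then show ?thesis using \<open>c \<noteq> c'\<close> by blast
  qed
  have "num_syt lam = (\<Sum>c\<in>C. card (S c))"
    unfolding num_syt_def union
    by (rule card_UN_disjoint) (use disjoint fin finite_syt[OF fin] in \<open>auto simp: C_def S_def\<close>)
  also have "\<dots> = (\<Sum>c\<in>C. num_syt (lam - {c}))"
    unfolding num_syt_def S_def
    by (rule sum.cong[OF refl], rule bij_betw_same_card, rule bij_betw_syt_restrict[OF P]) (auto simp: C_def)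
  also have "\<dots> = (\<Sum>mu\<in>down_set lam. num_syt mu)"
    unfolding down_set_eq_image_remove C_def by (subst sum.reindex) (auto simp: inj_on_def)
  finally show ?thesis .
qed

section \<open>The hook length formula and the two identities\<close>

text \<open>Frobenius' form of the hook length formula. Dividing by the value at the empty shape spares us
  the evaluation of the staircase Vandermonde product.\<close>
theorem num_syt_eq_frobenius:
  assumes "is_partition lam" "\<forall>(a, b)\<in>lam. b < K"
  shows "real (num_syt lam) = frobenius K (row_len lam) / frobenius K (\<lambda>_. 0)"
  using assms
proof (induction "card lam" arbitrary: lam)
  case 0
  then have "lam = {}" using is_partition_finite by auto
  moreover have "row_len {} = (\<lambda>_. 0)" by (auto simp: row_len_def)
  ultimately show ?case using num_syt_empty frobenius_zero_nonzero by simp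
next
  case (Suc N)
  note P = Suc.prems(1) and K = Suc.prems(2)
  let ?v = "row_len lam" and ?x = "beta K (row_len lam)" and ?c = "corner_cell lam"
  have ne: "lam \<noteq> {}" using Suc.hyps(2) by auto
  then obtain a b where "(a, b) \<in> lam" by auto
  then have "1 \<le> K" using K is_partition_pos[OF P] by fastforce
  have N: "(\<Sum>i\<in>{1..K}. ?v i) = Suc N"
    using card_eq_sum_row_len[OF P, of K] K Suc.hyps(2) by fastforce
  have R: "removable_rows lam \<subseteq> {1..K}" using removable_rows_subset[OF P K] by auto
  have "real (num_syt lam) = (\<Sum>j\<in>removable_rows lam. real (num_syt (lam - {?c j})))"
    using num_syt_branching[OF P ne] down_set_eq_image[OF P] inj_on_remove_corner_cell[OF P]
    by (simp add: sum.reindex)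
  also have "\<dots> = (\<Sum>j\<in>removable_rows lam.
      frobenius K ?v / frobenius K (\<lambda>_. 0) * down_ratio K ?x (Suc N) j)"
  proof (rule sum.cong[OF refl])
    fix j assume j: "j \<in> removable_rows lam"
    have "card (lam - {?c j}) = N"
      using Suc.hyps(2) corner_cell_in[OF P j] is_partition_finite[OF P] by simp
    then have "real (num_syt (lam - {?c j})) = frobenius K (?v(j := ?v j - 1)) / frobenius K (\<lambda>_. 0)"
      using Suc.hyps(1) is_partition_remove_corner_cell[OF P j] K row_len_remove_corner_cell[OF P j]
      by fastforce
    also have "frobenius K (?v(j := ?v j - 1)) = frobenius K ?v * down_ratio K ?x (Suc N) j"
      using frobenius_remove_box[of j K ?v] j R inj_on_beta_row_len[OF P] N
      by (auto simp: removable_rows_def)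
    finally show "real (num_syt (lam - {?c j})) = frobenius K ?v / frobenius K (\<lambda>_. 0) * down_ratio K ?x (Suc N) j"
      by simp
  qed
  also have "\<dots> = frobenius K ?v / frobenius K (\<lambda>_. 0) * (\<Sum>j\<in>removable_rows lam. down_ratio K ?x (Suc N) j)"
    by (simp add: sum_distrib_left)
  also have "(\<Sum>j\<in>removable_rows lam. down_ratio K ?x (Suc N) j) = (\<Sum>j\<in>{1..K}. down_ratio K ?x (Suc N) j)"
    by (rule sum.mono_neutral_left) (use R down_ratio_not_removable[OF P K] in auto)
  also have "(\<Sum>j\<in>{1..K}. down_ratio K ?x (Suc N) j) = 1"
    by (rule sum_down_ratio[OF \<open>1 \<le> K\<close> inj_on_beta_row_len[OF P]])
      (use sum_beta[of K ?v] N in \<open>simp_all del: of_nat_sum\<close>)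
  finally show ?case by simp
qed

lemma partition_rows_less:
  assumes "is_partition lam" "card lam < K"
  shows "\<forall>(a, b)\<in>lam. b < K"
  using row_index_le_card[OF assms(1)] assms(2) by fastforce

lemma num_syt_remove_corner_cell:
  assumes P: "is_partition lam" and K: "\<forall>(a, b)\<in>lam. b < K" and j: "j \<in> removable_rows lam"
  shows "real (num_syt (lam - {corner_cell lam j})) =
    real (num_syt lam) * down_ratio K (beta K (row_len lam)) (card lam) j"
proof -
  have "j \<in> {1..K}" using removable_rows_subset[OF P K] j by auto
  moreover have "card lam = (\<Sum>i\<in>{1..K}. row_len lam i)"
    using card_eq_sum_row_len[OF P, of K] K by fastforce
  ultimately show ?thesis
    using num_syt_eq_frobenius[OF is_partition_remove_corner_cell[OF P j], of K] K
      num_syt_eq_frobenius[OF P K] frobenius_remove_box[OF _ _ inj_on_beta_row_len[OF P]]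
      row_len_remove_corner_cell[OF P j] j
    by (auto simp: removable_rows_def)
qed

lemma num_syt_insert_add_cell:
  assumes P: "is_partition lam" and K: "card lam + 1 < K" and i: "i \<in> addable_rows lam"
  shows "real (num_syt (insert (add_cell lam i) lam)) =
    real (num_syt lam) * up_ratio K (beta K (row_len lam)) (card lam) i"
proof -
  let ?nu = "insert (add_cell lam i) lam"
  have Pnu: "is_partition ?nu" by (rule is_partition_insert_add_cell[OF P i])
  have "card ?nu = card lam + 1"
    using add_cell_notin[OF P] is_partition_finite[OF P] by simp
  then have Knu: "\<forall>(a, b)\<in>?nu. b < K" using partition_rows_less[OF Pnu] K by simp
  have Klam: "\<forall>(a, b)\<in>lam. b < K" using partition_rows_less[OF P] K by simp
  have "i \<in> {1..K}" using addable_rows_subset[OF P] i K by force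
  moreover have "card lam = (\<Sum>i\<in>{1..K}. row_len lam i)"
    using card_eq_sum_row_len[OF P, of K] Klam by fastforce
  ultimately show ?thesis
    using num_syt_eq_frobenius[OF Pnu Knu] num_syt_eq_frobenius[OF P Klam]
      frobenius_add_box[OF _ inj_on_beta_row_len[OF P]] row_len_insert_add_cell[OF P i]
    by auto
qed

lemma num_syt_hook_term_eq:
  assumes P: "is_partition lam" and K: "card lam + 1 < K"
    and i: "i \<in> addable_rows lam" and j: "j \<in> removable_rows lam"
  defines "x \<equiv> beta K (row_len lam)"
  defines "mu \<equiv> lam - {corner_cell lam j}" and "nu \<equiv> insert (add_cell lam i) lam"
  shows "real (num_syt mu * num_syt nu) / (real (hook lam (c_cell lam mu nu)))\<^sup>2 =
    (real (num_syt lam))\<^sup>2 * (down_ratio K x (card lam) j * up_ratio K x (card lam) i / (x i + 1 - x j)\<^sup>2)"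
proof -
  have "i \<le> K" "j \<le> K"
    using addable_rows_subset[OF P] removable_rows_subset[OF P partition_rows_less[OF P]] i j K
    by force+
  then show ?thesis
    unfolding mu_def nu_def x_def of_nat_mult
    using num_syt_remove_corner_cell[OF P partition_rows_less[OF P] j, of K]
      num_syt_insert_add_cell[OF P K i] hook_c_cell_sq[OF P i j] K
    by (simp add: power2_eq_square)
qed

lemma sum_up_set_hook_identity:
  assumes P: "is_partition lam" and ne: "lam \<noteq> {}" and mu: "mu \<in> down_set lam"
  shows "(\<Sum>nu\<in>up_set lam. real (num_syt mu * num_syt nu) / (real (hook lam (c_cell lam mu nu)))\<^sup>2) =
    (real (card lam) + 1) / real (card lam) * (real (num_syt lam))\<^sup>2"
proof -
  define n K where "n = card lam" and "K = card lam + 2"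
  define x where "x = beta K (row_len lam)"
  obtain j where j: "j \<in> removable_rows lam" and mu_eq: "mu = lam - {corner_cell lam j}"
    using mu down_set_eq_image[OF P] by auto
  have KP: "\<forall>(a, b)\<in>lam. b < K" using partition_rows_less[OF P] unfolding K_def by simp
  have A: "addable_rows lam \<subseteq> {1..K}" using addable_rows_subset[OF P] unfolding K_def by auto
  have "j \<in> {1..K}" "j \<noteq> K" using removable_rows_subset[OF P KP] j by auto
  have "x K = 0" using row_len_beyond[OF P KP] by (simp add: x_def beta_def)
  have "(\<Sum>nu\<in>up_set lam. real (num_syt mu * num_syt nu) / (real (hook lam (c_cell lam mu nu)))\<^sup>2) =
      (\<Sum>i\<in>addable_rows lam. (real (num_syt lam))\<^sup>2 *
        (down_ratio K x n j * up_ratio K x n i / (x i + 1 - x j)\<^sup>2))"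
    unfolding up_set_eq_image[OF P] sum.reindex[OF inj_on_insert_add_cell[OF P]] mu_eq
    using num_syt_hook_term_eq[OF P _ _ j, of K] unfolding K_def n_def x_def by simp
  also have "\<dots> = (real (num_syt lam))\<^sup>2 *
      (down_ratio K x n j * (\<Sum>i\<in>addable_rows lam. up_ratio K x n i / (x i + 1 - x j)\<^sup>2))"
    by (simp add: sum_distrib_left)
  also have "(\<Sum>i\<in>addable_rows lam. up_ratio K x n i / (x i + 1 - x j)\<^sup>2) =
      (\<Sum>i\<in>{1..K}. up_ratio K x n i / (x i + 1 - x j)\<^sup>2)"
    by (rule sum.mono_neutral_left) (use A up_ratio_not_addable[OF P] in \<open>auto simp: x_def\<close>)
  also have "down_ratio K x n j * \<dots> = (real n + 1) / real n"
  proof (rule down_ratio_times_sum_up_ratio)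
    show "2 \<le> K" "0 < n" "\<forall>i\<in>{1..K}. 0 \<le> x i"
      using is_partition_finite[OF P] ne by (auto simp: K_def n_def x_def beta_def card_gt_0_iff)
  qed (use \<open>j \<in> {1..K}\<close> \<open>j \<noteq> K\<close> \<open>x K = 0\<close> inj_on_beta_row_len[OF P] beta_minus_one_notin[OF P j]
        in \<open>simp_all add: x_def\<close>)
  finally show ?thesis unfolding n_def by simp
qed

lemma sum_down_set_hook_identity:
  assumes P: "is_partition lam" and ne: "lam \<noteq> {}" and nu: "nu \<in> up_set lam"
  shows "real (num_syt lam * num_syt nu) / real (card lam) +
    (\<Sum>mu\<in>down_set lam. real (num_syt mu * num_syt nu) / (real (hook lam (c_cell lam mu nu)))\<^sup>2) =
    (real (card lam) + 1) / real (card lam) * (real (num_syt lam))\<^sup>2"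
proof -
  define n K where "n = card lam" and "K = card lam + 2"
  define x where "x = beta K (row_len lam)"
  obtain i where i: "i \<in> addable_rows lam" and nu_eq: "nu = insert (add_cell lam i) lam"
    using nu up_set_eq_image[OF P] by auto
  have KP: "\<forall>(a, b)\<in>lam. b < K" using partition_rows_less[OF P] unfolding K_def by simp
  have R: "removable_rows lam \<subseteq> {1..K}" using removable_rows_subset[OF P KP] by auto
  have "i \<in> {1..K}" using addable_rows_subset[OF P] i unfolding K_def by auto
  have "(\<Sum>mu\<in>down_set lam. real (num_syt mu * num_syt nu) / (real (hook lam (c_cell lam mu nu)))\<^sup>2) =
      (\<Sum>j\<in>removable_rows lam. (real (num_syt lam))\<^sup>2 *
        (down_ratio K x n j * up_ratio K x n i / (x i + 1 - x j)\<^sup>2))"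
    unfolding down_set_eq_image[OF P] sum.reindex[OF inj_on_remove_corner_cell[OF P]] nu_eq
    using num_syt_hook_term_eq[OF P _ i, of K] unfolding K_def n_def x_def by simp
  also have "\<dots> = (real (num_syt lam))\<^sup>2 *
      (\<Sum>j\<in>removable_rows lam. down_ratio K x n j * up_ratio K x n i / (x i + 1 - x j)\<^sup>2)"
    by (simp add: sum_distrib_left)
  also have "(\<Sum>j\<in>removable_rows lam. down_ratio K x n j * up_ratio K x n i / (x i + 1 - x j)\<^sup>2) =
      (\<Sum>j\<in>{1..K}. down_ratio K x n j * up_ratio K x n i / (x i + 1 - x j)\<^sup>2)"
    by (rule sum.mono_neutral_left) (use R down_ratio_not_removable[OF P KP] in \<open>auto simp: x_def\<close>)
  finally have sum: "(\<Sum>mu\<in>down_set lam. real (num_syt mu * num_syt nu) / (real (hook lam (c_cell lam mu nu)))\<^sup>2) =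
      (real (num_syt lam))\<^sup>2 * (\<Sum>j\<in>{1..K}. down_ratio K x n j * up_ratio K x n i / (x i + 1 - x j)\<^sup>2)" .
  have "card lam + 1 < K" by (simp add: K_def)
  have first: "real (num_syt lam * num_syt nu) / real n = (real (num_syt lam))\<^sup>2 * (up_ratio K x n i / real n)"
    unfolding nu_eq of_nat_mult num_syt_insert_add_cell[OF P \<open>card lam + 1 < K\<close> i]
    by (simp add: n_def x_def power2_eq_square)
  have identity: "up_ratio K x n i / real n +
      (\<Sum>j\<in>{1..K}. down_ratio K x n j * up_ratio K x n i / (x i + 1 - x j)\<^sup>2) = (real n + 1) / real n"
  proof (rule up_ratio_plus_sum_down_ratio)
    show "1 \<le> K" "0 < n" "\<forall>i\<in>{1..K}. 0 \<le> x i"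
      using is_partition_finite[OF P] ne by (auto simp: K_def n_def x_def beta_def card_gt_0_iff)
  qed (use \<open>i \<in> {1..K}\<close> inj_on_beta_row_len[OF P] beta_plus_one_notin[OF P i] in \<open>simp_all add: x_def\<close>)
  show ?thesis
    unfolding n_def[symmetric] sum first distrib_left[symmetric] identity by (simp only: mult.commute)
qed

theorem corollary4p16:
  fixes lam :: "cell set"
  assumes "is_partition lam" and "lam \<noteq> {}"
  defines "n \<equiv> card lam"
  shows "(\<forall>mu\<in>down_set lam.
           (\<Sum>nu\<in>up_set lam. real (num_syt mu * num_syt nu) / (real (hook lam (c_cell lam mu nu)))^2)
             = (real n + 1) / real n * (real (num_syt lam))^2) \<and>
         (\<forall>nu\<in>up_set lam.
           real (num_syt lam * num_syt nu) / real n +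
           (\<Sum>mu\<in>down_set lam. real (num_syt mu * num_syt nu) / (real (hook lam (c_cell lam mu nu)))^2)
             = (real n + 1) / real n * (real (num_syt lam))^2)"
  using sum_up_set_hook_identity[OF assms(1,2)] sum_down_set_hook_identity[OF assms(1,2)]
  unfolding n_def by blast

end
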